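(* Let $\mathcal{H}$ be a complex Hilbert space and let $A\in\mathcal{B}(\mathcal{H})$ be a hyponormal operator, i.e. $A^*A-AA^*\ge 0$. Define \[ \xi_{|A|}=\inf_{\|x\|=1}\left\{\frac{\langle(|A|-|A^*|)x,x\rangle}{\langle(|A|+|A^*|)x,x\rangle}\right\}. \] Then for every non-negative, non-decreasing, operator convex function $f$ on $[0,\infty)$, \[ f(\omega(A))\le \frac12\left\| f\!\left(\frac{1}{1+\frac{\xi_{|A|}^2}{8}}|A|\right)+f\!\left(\frac{1}{1+\frac{\xi_{|A|}^2}{8}}|A^*|\right)\right\|. \]
   Context: $\mathcal{B}(\mathcal{H})$ denotes the algebra of bounded linear operators on $\mathcal{H}$; $|A|=(A^*A)^{1/2}$; $\omega(A)=\sup_{\|x\|=1}|\langle Ax,x\rangle|$ is the numerical radius and $\|\cdot\|$ the operator norm. A continuous real function $f$ on an interval $I$ is operator convex if $f(\lambda S+(1-\lambda)T)\le \lambda f(S)+(1-\lambda)f(T)$ for all self-adjoint $S,T$ with spectra in $I$ and all $\lambda\in[0,1]$. *)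

theory Defs
  imports "HOL-Analysis.Analysis" "HOL-Computational_Algebra.Polynomial"
begin

class complex_inner = real_normed_vector +
  fixes scaleC :: "complex \<Rightarrow> 'a \<Rightarrow> 'a"
  fixes cinner :: "'a \<Rightarrow> 'a \<Rightarrow> complex"
  assumes scaleC_add_right: "scaleC a (x + y) = scaleC a x + scaleC a y"
    and scaleC_add_left: "scaleC (a + b) x = scaleC a x + scaleC b x"
    and scaleC_scaleC: "scaleC a (scaleC b x) = scaleC (a * b) x"
    and scaleC_one: "scaleC 1 x = x"
    and scaleR_scaleC: "scaleR r x = scaleC (complex_of_real r) x"
    and cinner_commute: "cinner x y = cnj (cinner y x)"
    and cinner_add_left: "cinner (x + y) z = cinner x z + cinner y z"
    and cinner_scaleC_left: "cinner (scaleC c x) y = cnj c * cinner x y"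
    and cinner_self_real: "Im (cinner x x) = 0"
    and cinner_self_ge_zero: "0 \<le> Re (cinner x x)"
    and cinner_eq_zero_iff: "cinner x x = 0 \<longleftrightarrow> x = 0"
    and norm_eq_sqrt_cinner: "norm x = sqrt (Re (cinner x x))"

class chilbert = complex_inner + complete_space

definition bop :: "('a::complex_inner \<Rightarrow> 'a) \<Rightarrow> bool" where
  "bop T \<longleftrightarrow> bounded_linear T \<and> (\<forall>c x. T (scaleC c x) = scaleC c (T x))"

definition adj :: "('a::complex_inner \<Rightarrow> 'a) \<Rightarrow> ('a \<Rightarrow> 'a)" where
  "adj T = (THE S. \<forall>x y. cinner (T x) y = cinner x (S y))"

definition pos_op :: "('a::complex_inner \<Rightarrow> 'a) \<Rightarrow> bool" where
  "pos_op T \<longleftrightarrow> bop T \<and> (\<forall>x. Im (cinner x (T x)) = 0 \<and> 0 \<le> Re (cinner x (T x)))"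

definition op_le :: "('a::complex_inner \<Rightarrow> 'a) \<Rightarrow> ('a \<Rightarrow> 'a) \<Rightarrow> bool" where
  "op_le S T \<longleftrightarrow> pos_op (\<lambda>x. T x - S x)"

definition poly_op :: "real poly \<Rightarrow> ('a::complex_inner \<Rightarrow> 'a) \<Rightarrow> ('a \<Rightarrow> 'a)" where
  "poly_op p T = (\<lambda>x. \<Sum>i\<le>degree p. coeff p i *\<^sub>R (T ^^ i) x)"

text \<open>For a positive operator T (spectrum contained in [0, norm T]) and f continuous
  on [0, norm T], f(T) is the norm limit of p_n(T) for any sequence of real
  polynomials p_n converging uniformly to f on [0, norm T].\<close>
definition fcalc :: "(real \<Rightarrow> real) \<Rightarrow> ('a::complex_inner \<Rightarrow> 'a) \<Rightarrow> ('a \<Rightarrow> 'a)" where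
  "fcalc f T = (THE S. bop S \<and>
     (\<forall>p :: nat \<Rightarrow> real poly.
        uniform_limit {0..onorm T} (\<lambda>n. poly (p n)) f sequentially \<longrightarrow>
        ((\<lambda>n. onorm (\<lambda>x. poly_op (p n) T x - S x)) \<longlonglongrightarrow> 0)))"

definition abs_op :: "('a::complex_inner \<Rightarrow> 'a) \<Rightarrow> ('a \<Rightarrow> 'a)" where
  "abs_op T = fcalc sqrt (\<lambda>x. adj T (T x))"

definition hyponormal :: "('a::complex_inner \<Rightarrow> 'a) \<Rightarrow> bool" where
  "hyponormal A \<longleftrightarrow> bop A \<and> pos_op (\<lambda>x. adj A (A x) - A (adj A x))"

definition numrad :: "('a::complex_inner \<Rightarrow> 'a) \<Rightarrow> real" where
  "numrad A = (SUP x\<in>{x. norm x = 1}. cmod (cinner x (A x)))"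

text \<open>Operator convexity on [0,\<infinity>) (operators on the given space): self-adjoint
  operators with spectrum in [0,\<infinity>) are exactly the positive ones.\<close>
definition operator_convex :: "'a::complex_inner itself \<Rightarrow> (real \<Rightarrow> real) \<Rightarrow> bool" where
  "operator_convex _ f \<longleftrightarrow> continuous_on {0..} f \<and>
     (\<forall>(S::'a \<Rightarrow> 'a) T (l::real). pos_op S \<and> pos_op T \<and> 0 \<le> l \<and> l \<le> 1 \<longrightarrow>
        op_le (fcalc f (\<lambda>x. l *\<^sub>R S x + (1 - l) *\<^sub>R T x))
              (\<lambda>x. l *\<^sub>R fcalc f S x + (1 - l) *\<^sub>R fcalc f T x))"

text \<open>xi_|A| = inf over unit x of <(|A|-|A*|)x,x> / <(|A|+|A*|)x,x>
  (unit vectors where the denominator vanishes, where the quotient is undefined, are omitted).\<close>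
definition xi_op :: "('a::complex_inner \<Rightarrow> 'a) \<Rightarrow> real" where
  "xi_op A = Inf {Re (cinner x (abs_op A x - abs_op (adj A) x)) /
                  Re (cinner x (abs_op A x + abs_op (adj A) x)) | x.
                  norm x = 1 \<and> Re (cinner x (abs_op A x + abs_op (adj A) x)) \<noteq> 0}"

end

theory Submission
  imports Defs "HOL-Computational_Algebra.Fundamental_Theorem_Algebra"
begin

text \<open>Let \<open>M = \<parallel>A\<parallel>\<close>. Hyponormality gives \<open>\<parallel>A\<^sup>* x\<parallel> \<le> \<parallel>A x\<parallel>\<close> for all \<open>x\<close>, hence
  \<open>|A\<^sup>*| \<le> |A|\<close> by monotonicity of the operator square root. As \<open>\<parallel>A\<^sup>*\<parallel> = M\<close>, unit vectors
  \<open>x\<^sub>n\<close> with \<open>\<parallel>A\<^sup>* x\<^sub>n\<parallel> \<rightarrow> M\<close> also satisfy \<open>\<parallel>A x\<^sub>n\<parallel> \<rightarrow> M\<close>, which makes them approximate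
  eigenvectors of both \<open>|A|\<close> and \<open>|A\<^sup>*|\<close> for the eigenvalue \<open>M\<close>. Along them the (nonnegative)
  quotients defining \<open>\<xi>\<^sub>|\<^sub>A\<^sub>|\<close> tend to \<open>0\<close>, so \<open>\<xi>\<^sub>|\<^sub>A\<^sub>| = 0\<close> unless \<open>A = 0\<close>, and
  the scaling factor is \<open>1\<close>. The functional calculus turns them into approximate eigenvectors of
  \<open>f(|A|) + f(|A\<^sup>*|)\<close> for \<open>2 f(M)\<close>, so that operator has norm at least
  \<open>2 f(M) \<ge> 2 f(\<omega>(A))\<close>.

  The functional calculus \<open>f(T)\<close> of a positive \<open>T\<close> is the norm limit of \<open>p\<^sub>n(T)\<close> for
  polynomials \<open>p\<^sub>n \<rightarrow> f\<close> uniformly on \<open>[0, \<parallel>T\<parallel>]\<close>. It exists and behaves well because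
  \<open>p \<ge> 0\<close> on \<open>[0, \<parallel>T\<parallel>]\<close> implies \<open>p(T) \<ge> 0\<close> (factor \<open>p - m\<close> over \<open>\<complex>\<close>), whence
  \<open>\<parallel>p(T)\<parallel> \<le> sup |p|\<close> on that interval.\<close>

section \<open>Complex inner product spaces\<close>

lemma scaleC_zero_right [simp]: "scaleC a (0::'a::complex_inner) = 0"
proof -
  have "scaleC a (0::'a) = scaleC a 0 + scaleC a 0"
    by (metis add.right_neutral scaleC_add_right)
  then show ?thesis by simp
qed

lemma scaleC_zero_left [simp]: "scaleC 0 (x::'a::complex_inner) = 0"
proof -
  have "scaleC 0 x = scaleC 0 x + scaleC 0 x"
    by (metis add.right_neutral scaleC_add_left)
  then show ?thesis by simp
qed

lemma scaleC_minus_left: "scaleC (- a) (x::'a::complex_inner) = - scaleC a x"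
proof -
  have "scaleC (- a) x + scaleC a x = 0"
    by (metis scaleC_add_left add.left_inverse scaleC_zero_left)
  then show ?thesis by (simp add: eq_neg_iff_add_eq_0)
qed

lemma scaleC_minus_right: "scaleC a (- x::'a::complex_inner) = - scaleC a x"
proof -
  have "scaleC a (- x) + scaleC a x = 0"
    by (metis scaleC_add_right add.left_inverse scaleC_zero_right)
  then show ?thesis by (simp add: eq_neg_iff_add_eq_0)
qed

lemma scaleC_diff_right: "scaleC a (x - y::'a::complex_inner) = scaleC a x - scaleC a y"
  by (metis diff_conv_add_uminus scaleC_add_right scaleC_minus_right)

lemma scaleC_of_real: "scaleC (complex_of_real r) (x::'a::complex_inner) = r *\<^sub>R x"
  by (simp add: scaleR_scaleC)

lemma cinner_cnj_sym: "cnj (cinner y x) = cinner x (y::'a::complex_inner)"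
  using cinner_commute[of x y] by simp

lemma cinner_add_right: "cinner (x::'a::complex_inner) (y + z) = cinner x y + cinner x z"
proof -
  have "cinner x (y + z) = cnj (cinner (y + z) x)" by (rule cinner_commute)
  also have "\<dots> = cnj (cinner y x) + cnj (cinner z x)" by (simp add: cinner_add_left)
  finally show ?thesis by (simp add: cinner_cnj_sym)
qed

lemma cinner_scaleC_right: "cinner (x::'a::complex_inner) (scaleC c y) = c * cinner x y"
proof -
  have "cinner x (scaleC c y) = cnj (cinner (scaleC c y) x)" by (rule cinner_commute)
  also have "\<dots> = c * cnj (cinner y x)" by (simp add: cinner_scaleC_left)
  finally show ?thesis by (simp add: cinner_cnj_sym)
qed

lemma cinner_zero_left [simp]: "cinner 0 (y::'a::complex_inner) = 0"
proof -
  have "cinner 0 y = cinner 0 y + cinner 0 y" using cinner_add_left[of 0 0 y] by simp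
  then show ?thesis by simp
qed

lemma cinner_zero_right [simp]: "cinner (x::'a::complex_inner) 0 = 0"
  using cinner_commute[of x 0] by simp

lemma cinner_minus_left: "cinner (- x::'a::complex_inner) y = - cinner x y"
proof -
  have "cinner (- x) y + cinner x y = 0" using cinner_add_left[of "- x" x y] by simp
  then show ?thesis by (simp add: eq_neg_iff_add_eq_0)
qed

lemma cinner_minus_right: "cinner (x::'a::complex_inner) (- y) = - cinner x y"
proof -
  have "cinner x (- y) + cinner x y = 0" using cinner_add_right[of x "- y" y] by simp
  then show ?thesis by (simp add: eq_neg_iff_add_eq_0)
qed

lemma cinner_diff_left: "cinner (x - y::'a::complex_inner) z = cinner x z - cinner y z"
  using cinner_add_left[of x "- y" z] by (simp add: cinner_minus_left)

lemma cinner_diff_right: "cinner (x::'a::complex_inner) (y - z) = cinner x y - cinner x z"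
  using cinner_add_right[of x y "- z"] by (simp add: cinner_minus_right)

lemma cinner_scaleR_left: "cinner (r *\<^sub>R x::'a::complex_inner) y = of_real r * cinner x y"
  by (simp add: scaleR_scaleC cinner_scaleC_left)

lemma cinner_scaleR_right: "cinner (x::'a::complex_inner) (r *\<^sub>R y) = of_real r * cinner x y"
  by (simp add: scaleR_scaleC cinner_scaleC_right)

lemma Re_cinner_self: "Re (cinner x x) = (norm (x::'a::complex_inner))\<^sup>2"
  by (simp add: norm_eq_sqrt_cinner cinner_self_ge_zero)

lemma cinner_self: "cinner x x = complex_of_real ((norm (x::'a::complex_inner))\<^sup>2)"
  by (simp add: complex_eq_iff Re_cinner_self cinner_self_real)

lemma Re_cinner_sym: "Re (cinner (y::'a::complex_inner) x) = Re (cinner x y)"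
  by (subst cinner_commute) simp

lemma norm_add_sq:
  "(norm (x + y::'a::complex_inner))\<^sup>2 = (norm x)\<^sup>2 + (norm y)\<^sup>2 + 2 * Re (cinner x y)"
proof -
  have "(norm (x + y))\<^sup>2 = Re (cinner (x+y) (x+y))" by (simp add: Re_cinner_self)
  also have "\<dots> = Re (cinner x x) + Re (cinner y y) + Re (cinner x y) + Re (cinner y x)"
    by (simp add: cinner_add_left cinner_add_right)
  finally show ?thesis by (simp add: Re_cinner_self Re_cinner_sym)
qed

lemma norm_diff_sq:
  "(norm (x - y::'a::complex_inner))\<^sup>2 = (norm x)\<^sup>2 + (norm y)\<^sup>2 - 2 * Re (cinner x y)"
  using norm_add_sq[of x "- y"] by (simp add: cinner_minus_right)

lemma norm_scaleC: "norm (scaleC c (x::'a::complex_inner)) = cmod c * norm x"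
proof -
  have "cinner (scaleC c x) (scaleC c x) = (c * cnj c) * cinner x x"
    by (simp add: cinner_scaleC_left cinner_scaleC_right)
  also have "\<dots> = complex_of_real ((cmod c * norm x)\<^sup>2)"
    by (simp add: cinner_self complex_norm_square[symmetric] power_mult_distrib)
  finally have "(norm (scaleC c x))\<^sup>2 = (cmod c * norm x)\<^sup>2"
    by (simp add: Re_cinner_self[symmetric])
  then show ?thesis by (simp add: power2_eq_iff_nonneg)
qed

lemma cinner_ext:
  assumes "\<And>z. cinner z x = cinner z (y::'a::complex_inner)"
  shows "x = y"
proof -
  have "cinner (x - y) (x - y) = 0" using assms[of "x - y"] by (simp add: cinner_diff_right)
  then show ?thesis by (simp add: cinner_eq_zero_iff)
qed

lemma quadratic_nonneg_imp_le:
  fixes a c d :: real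
  assumes "\<And>s. 0 \<le> a - 2 * s * c + s\<^sup>2 * c * d" and "0 \<le> c" and "0 \<le> d" and "0 \<le> a"
  shows "c \<le> a * d"
proof (cases "d > 0")
  case True
  have "0 \<le> a - 2 * (1/d) * c + (1/d)\<^sup>2 * c * d" by (rule assms(1))
  also have "\<dots> = a - c / d" using True by (simp add: power2_eq_square field_simps)
  finally show ?thesis using True by (simp add: field_simps)
next
  case False
  then have d: "d = 0" using assms by simp
  show ?thesis
  proof (rule ccontr)
    assume "\<not> c \<le> a * d"
    then have c: "c > 0" using d by simp
    have "0 \<le> a - 2 * ((a+1)/(2*c)) * c + ((a+1)/(2*c))\<^sup>2 * c * d" by (rule assms(1))
    also have "\<dots> = -1" using c d by (simp add: field_simps)
    finally show False by simp
  qed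
qed

lemma hermitian_form_Cauchy_Schwarz:
  fixes B :: "'a::complex_inner \<Rightarrow> 'a \<Rightarrow> complex"
  assumes add: "\<And>x y z. B (x + y) z = B x z + B y z"
    and sc: "\<And>c x y. B (scaleC c x) y = cnj c * B x y"
    and conj_sym: "\<And>x y. B x y = cnj (B y x)"
    and pos: "\<And>x. 0 \<le> Re (B x x)"
  shows "(cmod (B x y))\<^sup>2 \<le> Re (B x x) * Re (B y y)"
proof -
  have addr: "\<And>x y z. B x (y + z) = B x y + B x z"
    by (metis add conj_sym complex_cnj_add)
  have scr: "\<And>c x y. B x (scaleC c y) = c * B x y"
    by (metis sc conj_sym complex_cnj_cnj complex_cnj_mult)
  define b where "b = B x y"
  have bb: "b * cnj b = (complex_of_real (cmod b))\<^sup>2" using complex_norm_square[of b] by simp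
  have bb2: "b * cnj b = complex_of_real (cmod b) * complex_of_real (cmod b)" using bb by (simp add: power2_eq_square)
  define c where "c = (cmod b)\<^sup>2"
  have key: "0 \<le> Re (B x x) - 2 * s * c + s\<^sup>2 * c * Re (B y y)" for s :: real
  proof -
    define u where "u = - (complex_of_real s * cnj b)"
    have "B (x + scaleC u y) (x + scaleC u y) = B x x + u * b + cnj u * cnj b + cnj u * u * B y y"
      by (simp add: add addr sc scr b_def conj_sym[of y x] algebra_simps)
    moreover have "u * b = - complex_of_real (s * c)"
      by (simp add: u_def c_def bb[symmetric] mult.commute mult.left_commute)
    moreover have "cnj u * cnj b = - complex_of_real (s * c)"
      by (simp add: u_def c_def bb[symmetric] mult.commute mult.left_commute)
    moreover have "cnj u * u = complex_of_real (s\<^sup>2 * c)"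
      by (simp add: u_def c_def bb2[symmetric] power2_eq_square mult.commute mult.left_commute)
    ultimately have "Re (B (x + scaleC u y) (x + scaleC u y)) = Re (B x x) - 2 * s * c + s\<^sup>2 * c * Re (B y y)"
      by simp
    then show ?thesis using pos by metis
  qed
  have "c \<le> Re (B x x) * Re (B y y)"
    by (rule quadratic_nonneg_imp_le[OF key]) (auto simp: c_def pos)
  then show ?thesis by (simp add: c_def b_def)
qed

lemma norm_cinner_le: "cmod (cinner x y) \<le> norm (x::'a::complex_inner) * norm y"
proof -
  have "(cmod (cinner x y))\<^sup>2 \<le> Re (cinner x x) * Re (cinner y y)"
  proof (rule hermitian_form_Cauchy_Schwarz)
    show "cinner (x + y) z = cinner x z + cinner y z" for x y z :: 'a by (rule cinner_add_left)
    show "cinner (scaleC c x) y = cnj c * cinner x y" for c and x y :: 'a by (rule cinner_scaleC_left)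
    show "cinner x y = cnj (cinner y x)" for x y :: 'a by (rule cinner_commute)
    show "0 \<le> Re (cinner x x)" for x :: 'a by (rule cinner_self_ge_zero)
  qed
  then have "(cmod (cinner x y))\<^sup>2 \<le> (norm x * norm y)\<^sup>2"
    by (simp add: Re_cinner_self power_mult_distrib)
  then show ?thesis by (rule power2_le_imp_le) simp
qed

lemma Re_cinner_le: "Re (cinner x y) \<le> norm (x::'a::complex_inner) * norm y"
  using norm_cinner_le[of x y] abs_Re_le_cmod[of "cinner x y"] by linarith

section \<open>Bounded and positive operators\<close>

lemma bop_bounded_linear: "bop T \<Longrightarrow> bounded_linear T"
  by (simp add: bop_def)

lemma bop_scaleC: "bop T \<Longrightarrow> T (scaleC c x) = scaleC c (T x)"
  by (simp add: bop_def)

lemma bop_add: "bop T \<Longrightarrow> T (x + y) = T x + T y"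
proof -
  assume "bop T" then interpret bounded_linear T by (rule bop_bounded_linear)
  show ?thesis by (rule add)
qed

lemma bop_diff: "bop T \<Longrightarrow> T (x - y) = T x - T y"
proof -
  assume "bop T" then interpret bounded_linear T by (rule bop_bounded_linear)
  show ?thesis by (rule diff)
qed

lemma bop_zero: "bop T \<Longrightarrow> T 0 = 0"
proof -
  assume "bop T" then interpret bounded_linear T by (rule bop_bounded_linear)
  show ?thesis by (rule zero)
qed

lemma bop_scaleR: "bop T \<Longrightarrow> T (r *\<^sub>R x) = r *\<^sub>R T x"
proof -
  assume "bop T" then interpret bounded_linear T by (rule bop_bounded_linear)
  show ?thesis by (rule scale)
qed

lemma bop_sum: "bop T \<Longrightarrow> T (sum g A) = (\<Sum>a\<in>A. T (g a))"
proof -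
  assume "bop T" then interpret bounded_linear T by (rule bop_bounded_linear)
  show ?thesis by (rule sum)
qed

lemma norm_bop_le: "bop T \<Longrightarrow> norm (T x) \<le> onorm T * norm x"
  by (rule onorm[OF bop_bounded_linear])

lemma onorm_bop_nonneg: "bop T \<Longrightarrow> 0 \<le> onorm T"
  by (rule onorm_pos_le[OF bop_bounded_linear])

lemma bopI:
  fixes T :: "'a::complex_inner \<Rightarrow> 'a"
  assumes "\<And>x y. T (x + y) = T x + T y" and "\<And>c x. T (scaleC c x) = scaleC c (T x)"
    and "\<And>x. norm (T x) \<le> K * norm x"
  shows "bop T"
  unfolding bop_def
proof (intro conjI allI)
  show "bounded_linear T"
  proof (rule bounded_linear_intro[where K = K])
    show "T (r *\<^sub>R x) = r *\<^sub>R T x" for r x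
      using assms(2)[of "complex_of_real r" x] by (simp add: scaleR_scaleC)
    show "norm (T x) \<le> norm x * K" for x using assms(3)[of x] by (simp add: mult.commute)
  qed (rule assms(1))
qed (rule assms(2))

lemma bop_id: "bop (\<lambda>x::'a::complex_inner. x)"
  by (rule bopI[where K=1]) auto

lemma bop_compose: "bop T \<Longrightarrow> bop S \<Longrightarrow> bop (\<lambda>x. T (S x))"
  apply (rule bopI[where K = "onorm T * onorm S"])
  apply (simp add: bop_add)
  apply (simp add: bop_scaleC)
  by (metis (no_types, opaque_lifting) norm_bop_le onorm_bop_nonneg mult.assoc mult_left_mono order_trans)

lemma bop_add_op: "bop T \<Longrightarrow> bop S \<Longrightarrow> bop (\<lambda>x. T x + S x)"
proof (rule bopI[where K = "onorm T + onorm S"])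
  assume T: "bop T" and S: "bop S"
  show "T (x + y) + S (x + y) = T x + S x + (T y + S y)" for x y by (simp add: bop_add T S)
  show "T (scaleC c x) + S (scaleC c x) = scaleC c (T x + S x)" for c x
    by (simp add: bop_scaleC T S scaleC_add_right)
  show "norm (T x + S x) \<le> (onorm T + onorm S) * norm x" for x
    using norm_triangle_ineq[of "T x" "S x"] norm_bop_le[OF T, of x] norm_bop_le[OF S, of x]
    by (simp add: distrib_right)
qed

lemma bop_uminus_op: "bop T \<Longrightarrow> bop (\<lambda>x. - T x)"
proof (rule bopI[where K = "onorm T"])
  assume T: "bop T"
  show "- T (x + y) = - T x + - T y" for x y by (simp add: bop_add T)
  show "- T (scaleC c x) = scaleC c (- T x)" for c x by (simp add: bop_scaleC T scaleC_minus_right)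
  show "norm (- T x) \<le> onorm T * norm x" for x using norm_bop_le[OF T, of x] by simp
qed

lemma bop_diff_op: "bop T \<Longrightarrow> bop S \<Longrightarrow> bop (\<lambda>x. T x - S x)"
  using bop_add_op[of T "\<lambda>x. - S x"] bop_uminus_op[of S] by simp

lemma bop_scaleR_left: "bop T \<Longrightarrow> bop (\<lambda>x. r *\<^sub>R T x)"
proof (rule bopI[where K = "\<bar>r\<bar> * onorm T"])
  assume T: "bop T"
  show "r *\<^sub>R T (x + y) = r *\<^sub>R T x + r *\<^sub>R T y" for x y by (simp add: bop_add T scaleR_add_right)
  show "r *\<^sub>R T (scaleC c x) = scaleC c (r *\<^sub>R T x)" for c x
    by (simp add: bop_scaleC T scaleR_scaleC scaleC_scaleC mult.commute)
  show "norm (r *\<^sub>R T x) \<le> \<bar>r\<bar> * onorm T * norm x" for x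
    using norm_bop_le[OF T, of x] by (simp add: mult.assoc mult_left_mono)
qed

lemma bop_scaleR_id: "bop (\<lambda>x::'a::complex_inner. r *\<^sub>R x)"
proof -
  have "bop (\<lambda>x::'a. r *\<^sub>R (\<lambda>x. x) x)" by (rule bop_scaleR_left[OF bop_id])
  then show ?thesis by simp
qed

definition hermitian :: "('a::complex_inner \<Rightarrow> 'a) \<Rightarrow> bool" where
  "hermitian T \<longleftrightarrow> (\<forall>x y. cinner x (T y) = cinner (T x) y)"

lemma hermitianD: "hermitian T \<Longrightarrow> cinner x (T y) = cinner (T x) y"
  by (simp add: hermitian_def)

lemma hermitian_Im_cinner: "hermitian T \<Longrightarrow> Im (cinner x (T x)) = 0"
proof -
  assume "hermitian T"
  then have "cinner x (T x) = cnj (cinner x (T x))"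
    by (metis hermitianD cinner_commute)
  then show ?thesis by (metis cnj.simps(2) complex.sel(2) neg_equal_zero)
qed

lemma hermitian_cinner_of_real: "hermitian T \<Longrightarrow> cinner x (T x) = complex_of_real (Re (cinner x (T x)))"
  by (simp add: complex_eq_iff hermitian_Im_cinner)

lemma hermitian_cinner_left_of_real: "hermitian T \<Longrightarrow> cinner (T x) x = complex_of_real (Re (cinner x (T x)))"
  by (metis hermitianD hermitian_cinner_of_real)

lemma pos_opD: "pos_op T \<Longrightarrow> 0 \<le> Re (cinner x (T x))"
  by (simp add: pos_op_def)

lemma pos_op_bop: "pos_op T \<Longrightarrow> bop T"
  by (simp add: pos_op_def)

lemma hermitianI:
  fixes T :: "'a::complex_inner \<Rightarrow> 'a"
  assumes T: "bop T" and im: "\<And>z. Im (cinner z (T z)) = 0"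
  shows "hermitian T"
proof -
  have e1: "Im (cinner u (T v)) + Im (cinner v (T u)) = 0" for u v
  proof -
    have "cinner (u + v) (T (u + v)) = cinner u (T u) + cinner v (T v) + (cinner u (T v) + cinner v (T u))"
      by (simp add: bop_add[OF T] cinner_add_left cinner_add_right)
    then show ?thesis using im[of "u+v"] im[of u] im[of v] by simp
  qed
  have e2: "Re (cinner u (T v)) - Re (cinner v (T u)) = 0" for u v
  proof -
    have "Im (cinner u (T (scaleC \<i> v))) + Im (cinner (scaleC \<i> v) (T u)) = 0" by (rule e1)
    then show ?thesis by (simp add: bop_scaleC[OF T] cinner_scaleC_right cinner_scaleC_left)
  qed
  show ?thesis unfolding hermitian_def
  proof (intro allI)
    fix x y
    have a: "Re (cinner (T x) y) = Re (cinner y (T x))" by (rule Re_cinner_sym)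
    have b: "Im (cinner (T x) y) = - Im (cinner y (T x))" by (subst cinner_commute) simp
    show "cinner x (T y) = cinner (T x) y"
      using e1[of x y] e2[of x y] a b by (simp add: complex_eq_iff)
  qed
qed

lemma pos_op_hermitian: "pos_op T \<Longrightarrow> hermitian T"
  by (rule hermitianI) (auto simp: pos_op_def)

lemma norm_sq_le_onorm_cinner_pos_op:
  assumes P: "pos_op P"
  shows "(norm (P x))\<^sup>2 \<le> onorm P * Re (cinner x (P x))"
proof -
  have B: "bop P" using P by (rule pos_op_bop)
  have H: "hermitian P" using P by (rule pos_op_hermitian)
  have cs: "(cmod (cinner x (P (P x))))\<^sup>2 \<le> Re (cinner x (P x)) * Re (cinner (P x) (P (P x)))"
  proof (rule hermitian_form_Cauchy_Schwarz[where B = "\<lambda>u v. cinner u (P v)"])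
    show "cinner (u + v) (P w) = cinner u (P w) + cinner v (P w)" for u v w by (rule cinner_add_left)
    show "cinner (scaleC c u) (P v) = cnj c * cinner u (P v)" for c u v by (rule cinner_scaleC_left)
    show "cinner u (P v) = cnj (cinner v (P u))" for u v
      by (metis H hermitianD cinner_commute)
    show "0 \<le> Re (cinner u (P u))" for u using P by (rule pos_opD)
  qed
  have e: "cinner x (P (P x)) = complex_of_real ((norm (P x))\<^sup>2)"
    using hermitianD[OF H, of x "P x"] by (simp add: cinner_self)
  have r: "Re (cinner (P x) (P (P x))) \<le> onorm P * (norm (P x))\<^sup>2"
  proof -
    have "Re (cinner (P x) (P (P x))) \<le> norm (P x) * norm (P (P x))" by (rule Re_cinner_le)
    also have "\<dots> \<le> norm (P x) * (onorm P * norm (P x))"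
      by (rule mult_left_mono[OF norm_bop_le[OF B]]) simp
    finally show ?thesis by (simp add: power2_eq_square mult_ac)
  qed
  have R0: "0 \<le> Re (cinner x (P x))" using P by (rule pos_opD)
  have e': "cmod (cinner x (P (P x))) = (norm (P x))\<^sup>2"
    by (simp only: e norm_of_real) simp
  have "((norm (P x))\<^sup>2)\<^sup>2 \<le> Re (cinner x (P x)) * (onorm P * (norm (P x))\<^sup>2)"
    using cs mult_left_mono[OF r R0] unfolding e' by linarith
  then have "(norm (P x))\<^sup>2 * (norm (P x))\<^sup>2 \<le> (onorm P * Re (cinner x (P x))) * (norm (P x))\<^sup>2"
    by (simp add: power2_eq_square mult_ac)
  show ?thesis
  proof (cases "norm (P x) = 0")
    case True then show ?thesis using R0 onorm_bop_nonneg[OF B] by simp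
  next
    case False
    then have "0 < (norm (P x))\<^sup>2" by simp
    with \<open>(norm (P x))\<^sup>2 * (norm (P x))\<^sup>2 \<le> (onorm P * Re (cinner x (P x))) * (norm (P x))\<^sup>2\<close>
    show ?thesis using mult_le_cancel_right_pos by blast
  qed
qed

lemma pos_op_scaleR:
  assumes P: "pos_op Q" and c: "0 \<le> c"
  shows "pos_op (\<lambda>y. c *\<^sub>R Q y)"
  using P c bop_scaleR_left[OF pos_op_bop[OF P]]
  by (simp add: pos_op_def cinner_scaleR_right)

section \<open>Riesz representation and the adjoint\<close>

abbreviation epsn :: "nat \<Rightarrow> real" where "epsn n \<equiv> inverse (real (Suc n))"

lemma epsn_pos: "0 < epsn n" by simp

lemma LIMSEQ_epsn: "epsn \<longlonglongrightarrow> 0" by (rule LIMSEQ_inverse_real_of_nat)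

lemma epsn_eventually_less: "0 < e \<Longrightarrow> \<exists>N. \<forall>n\<ge>N. epsn n < e"
  using LIMSEQ_epsn unfolding LIMSEQ_iff by (metis abs_of_pos epsn_pos real_norm_def diff_zero)

lemma le_0_if_le_epsn:
  fixes r K :: real
  assumes "\<And>n. r \<le> K * epsn n"
  shows "r \<le> 0"
proof -
  have "(\<lambda>n. K * epsn n) \<longlonglongrightarrow> K * 0" by (intro tendsto_mult tendsto_const LIMSEQ_epsn)
  then show ?thesis using assms by (intro LIMSEQ_le_const[of "\<lambda>n. K * epsn n"]) auto
qed

lemma parallelogram_law_cinner:
  "(norm (a - b::'a::complex_inner))\<^sup>2 = 2 * (norm a)\<^sup>2 + 2 * (norm b)\<^sup>2 - (norm (a + b))\<^sup>2"
  using norm_add_sq[of a b] norm_diff_sq[of a b] by simp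

lemma norm_diff_sq_le_if_midpoint_far:
  fixes u a b :: "'a::complex_inner"
  assumes mid: "d \<le> norm (u - (1/2) *\<^sub>R (a + b))" and d: "0 \<le> d"
    and a: "norm (u - a) \<le> d + ea" "0 \<le> ea" "ea \<le> 1"
    and b: "norm (u - b) \<le> d + eb" "0 \<le> eb" "eb \<le> 1"
  shows "(norm (a - b))\<^sup>2 \<le> (4 * d + 2) * (ea + eb)"
proof -
  have "(u - b) + (u - a) = 2 *\<^sub>R (u - (1/2) *\<^sub>R (a + b))"
    by (simp add: scaleR_add_right scaleR_diff_right scaleR_2 algebra_simps)
  then have lo: "2 * d \<le> norm ((u - b) + (u - a))" using mid by simp
  have "(norm (a - b))\<^sup>2 = (norm ((u - b) - (u - a)))\<^sup>2" by (simp add: algebra_simps)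
  also have "\<dots> = 2 * (norm (u - b))\<^sup>2 + 2 * (norm (u - a))\<^sup>2 - (norm ((u - b) + (u - a)))\<^sup>2"
    by (rule parallelogram_law_cinner)
  also have "\<dots> \<le> 2 * (d + eb)\<^sup>2 + 2 * (d + ea)\<^sup>2 - (2 * d)\<^sup>2"
  proof -
    have "(norm (u - a))\<^sup>2 \<le> (d + ea)\<^sup>2" "(norm (u - b))\<^sup>2 \<le> (d + eb)\<^sup>2"
      using a(1) b(1) by (intro power_mono; simp)+
    moreover have "(2 * d)\<^sup>2 \<le> (norm ((u - b) + (u - a)))\<^sup>2" using lo d by (intro power_mono) auto
    ultimately show ?thesis by linarith
  qed
  also have "\<dots> = 4 * d * eb + 2 * eb * eb + 4 * d * ea + 2 * ea * ea"
    by (simp add: power2_eq_square algebra_simps)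
  also have "\<dots> \<le> (4 * d + 2) * (ea + eb)"
    using mult_left_le[OF a(3) a(2)] mult_left_le[OF b(3) b(2)] by (simp add: algebra_simps)
  finally show ?thesis .
qed

lemma cinner_eq_0_if_norm_le_norm_diff:
  fixes w k :: "'a::complex_inner"
  assumes min: "\<And>t. norm w \<le> norm (w - scaleC t k)"
  shows "cinner w k = 0"
proof -
  define b where "b = cinner w k"
  have "(cmod b)\<^sup>2 \<le> 0 * (norm k)\<^sup>2"
  proof (rule quadratic_nonneg_imp_le)
    fix s :: real
    have "(norm (w - scaleC (complex_of_real s * cnj b) k))\<^sup>2 =
          (norm w)\<^sup>2 + (cmod (complex_of_real s * cnj b) * norm k)\<^sup>2
           - 2 * Re (complex_of_real s * cnj b * b)"
      by (simp add: norm_diff_sq norm_scaleC cinner_scaleC_right b_def mult.assoc)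
    also have "Re (complex_of_real s * cnj b * b) = s * (cmod b)\<^sup>2"
      using cmod_power2[of b] by (simp add: power2_eq_square algebra_simps)
    also have "(cmod (complex_of_real s * cnj b) * norm k)\<^sup>2 = s\<^sup>2 * (cmod b)\<^sup>2 * (norm k)\<^sup>2"
      by (simp add: norm_mult power_mult_distrib)
    finally have "(norm (w - scaleC (complex_of_real s * cnj b) k))\<^sup>2 =
        (norm w)\<^sup>2 + s\<^sup>2 * (cmod b)\<^sup>2 * (norm k)\<^sup>2 - 2 * (s * (cmod b)\<^sup>2)" .
    moreover have "(norm w)\<^sup>2 \<le> (norm (w - scaleC (complex_of_real s * cnj b) k))\<^sup>2"
      using min by (intro power_mono) auto
    ultimately show "0 \<le> 0 - 2 * s * (cmod b)\<^sup>2 + s\<^sup>2 * (cmod b)\<^sup>2 * (norm k)\<^sup>2" by simp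
  qed auto
  then show ?thesis by (simp add: b_def)
qed

lemma kernel_nearest_point:
  fixes \<phi> :: "'a::chilbert \<Rightarrow> complex"
  assumes bl: "bounded_linear \<phi>" and sc: "\<And>c x. \<phi> (scaleC c x) = c * \<phi> x"
  obtains k0 where "\<phi> k0 = 0" and "\<And>k. \<phi> k = 0 \<Longrightarrow> norm (u - k0) \<le> norm (u - k)"
proof -
  interpret phi: bounded_linear \<phi> by (rule bl)
  define D where "D = (\<lambda>k. norm (u - k)) ` {k. \<phi> k = 0}"
  define d where "d = Inf D"
  have Dne: "D \<noteq> {}" using phi.zero unfolding D_def by blast
  have Dbd: "bdd_below D" unfolding D_def by (rule bdd_belowI[of _ 0]) auto
  have dle: "d \<le> norm (u - k)" if "\<phi> k = 0" for k
    unfolding d_def D_def by (rule cInf_lower) (use that Dbd D_def in auto)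
  have d0: "0 \<le> d" unfolding d_def by (rule cInf_greatest[OF Dne]) (auto simp: D_def)
  have "\<exists>k. \<phi> k = 0 \<and> norm (u - k) < d + epsn n" for n
  proof -
    obtain t where "t \<in> D" "t < d + epsn n" using cInf_lessD[OF Dne, of "d + epsn n"] by (auto simp: d_def)
    then show ?thesis unfolding D_def by auto
  qed
  then obtain k where kK: "\<And>n. \<phi> (k n) = 0" and kd: "\<And>n. norm (u - k n) < d + epsn n"
    by metis
  have mid: "\<phi> ((1/2) *\<^sub>R (k m + k n)) = 0" for m n by (simp add: phi.scaleR phi.add kK)
  have "Cauchy k"
  proof (rule CauchyI)
    fix e :: real assume e: "0 < e"
    define c where "c = e\<^sup>2 / (8 * d + 4)"
    have "(8 * d + 4) * c = e\<^sup>2" using d0 by (simp add: c_def)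
    then have c: "(4 * d + 2) * (c + c) = e\<^sup>2" by (simp add: algebra_simps)
    obtain N where N: "\<And>n. n \<ge> N \<Longrightarrow> epsn n < c"
      using epsn_eventually_less[of c] e d0 by (auto simp: c_def)
    show "\<exists>M. \<forall>m\<ge>M. \<forall>n\<ge>M. norm (k m - k n) < e"
    proof (intro exI allI impI)
      fix m n assume "N \<le> m" "N \<le> n"
      have "(norm (k m - k n))\<^sup>2 \<le> (4 * d + 2) * (epsn m + epsn n)"
        by (rule norm_diff_sq_le_if_midpoint_far[OF dle[OF mid] d0])
           (use kd less_imp_le in \<open>auto simp: field_simps\<close>)
      also have "\<dots> < (4 * d + 2) * (c + c)"
        using N \<open>N \<le> m\<close> \<open>N \<le> n\<close> d0 by (intro mult_strict_left_mono add_strict_mono) auto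
      finally show "norm (k m - k n) < e" using e c by (simp add: power_less_imp_less_base)
    qed
  qed
  then obtain k0 where lim: "k \<longlonglongrightarrow> k0" using Cauchy_convergent_iff convergent_def by blast
  have "(\<lambda>n. \<phi> (k n)) \<longlonglongrightarrow> \<phi> k0" by (rule phi.tendsto[OF lim])
  then have k0K: "\<phi> k0 = 0" using kK LIMSEQ_unique[OF _ tendsto_const] by simp
  have "norm (u - k0) \<le> d"
  proof (rule LIMSEQ_le)
    show "(\<lambda>n. norm (u - k n)) \<longlonglongrightarrow> norm (u - k0)" by (intro tendsto_intros lim)
    show "(\<lambda>n. d + epsn n) \<longlonglongrightarrow> d" using tendsto_add[OF tendsto_const LIMSEQ_epsn] by simp
    show "\<exists>N. \<forall>n\<ge>N. norm (u - k n) \<le> d + epsn n" using kd less_imp_le by blast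
  qed
  then show ?thesis using that[OF k0K] dle order_trans by blast
qed

text \<open>The functional is \<open>\<langle>w, \<cdot>\<rangle>\<close> up to a factor, where \<open>w = u - k\<^sub>0\<close> for \<open>\<phi> u = 1\<close> and \<open>k\<^sub>0\<close> the
  point of the kernel nearest to \<open>u\<close>; minimality makes \<open>w\<close> orthogonal to the kernel.\<close>
lemma riesz_representation:
  fixes \<phi> :: "'a::chilbert \<Rightarrow> complex"
  assumes add: "\<And>x y. \<phi> (x + y) = \<phi> x + \<phi> y"
    and sc: "\<And>c x. \<phi> (scaleC c x) = c * \<phi> x"
    and bd: "\<And>x. cmod (\<phi> x) \<le> K * norm x"
  shows "\<exists>z. \<forall>x. \<phi> x = cinner z x"
proof (cases "\<forall>x. \<phi> x = 0")
  case True
  then show ?thesis by (intro exI[of _ 0]) simp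
next
  case False
  then obtain u0 where u0: "\<phi> u0 \<noteq> 0" by blast
  define u where "u = scaleC (1 / \<phi> u0) u0"
  have u1: "\<phi> u = 1" using u0 by (simp add: u_def sc)
  have bl: "bounded_linear \<phi>"
  proof (rule bounded_linear_intro[where K = K])
    show "\<phi> (r *\<^sub>R x) = r *\<^sub>R \<phi> x" for r x
      by (simp add: scaleR_scaleC sc scaleR_conv_of_real)
    show "norm (\<phi> x) \<le> norm x * K" for x using bd[of x] by (simp add: mult.commute)
  qed (rule add)
  interpret phi: bounded_linear \<phi> by (rule bl)
  obtain k0 where k0K: "\<phi> k0 = 0" and min: "\<And>k. \<phi> k = 0 \<Longrightarrow> norm (u - k0) \<le> norm (u - k)"
    using kernel_nearest_point[OF bl sc] by blast
  define w where "w = u - k0"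
  have orth: "cinner w k = 0" if "\<phi> k = 0" for k
  proof (rule cinner_eq_0_if_norm_le_norm_diff)
    fix t
    have "\<phi> (k0 + scaleC t k) = 0" by (simp add: add sc k0K that)
    then show "norm w \<le> norm (w - scaleC t k)" using min by (force simp: w_def algebra_simps)
  qed
  have wne: "w \<noteq> 0" using k0K u1 by (auto simp: w_def)
  have "cinner w u = cinner w w + cinner w k0" by (simp add: w_def cinner_diff_right)
  then have wu: "cinner w u = complex_of_real ((norm w)\<^sup>2)" using orth[OF k0K] by (simp add: cinner_self)
  show ?thesis
  proof (intro exI allI)
    fix x
    have "\<phi> (x - scaleC (\<phi> x) u) = 0" by (simp add: phi.diff sc u1)
    then have "cinner w (x - scaleC (\<phi> x) u) = 0" by (rule orth)
    then have "cinner w x = \<phi> x * cinner w u" by (simp add: cinner_diff_right cinner_scaleC_right)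
    then have "cinner w x = \<phi> x * complex_of_real ((norm w)\<^sup>2)" by (simp add: wu)
    then show "\<phi> x = cinner (scaleC (complex_of_real (1 / (norm w)\<^sup>2)) w) x"
      using wne by (simp add: cinner_scaleC_left field_simps)
  qed
qed

lemma adj_exists:
  fixes T :: "'a::chilbert \<Rightarrow> 'a"
  assumes T: "bop T"
  shows "\<exists>S. \<forall>x y. cinner (T x) y = cinner x (S y)"
proof -
  have "\<exists>z. \<forall>x. cinner (T x) y = cinner x z" for y
  proof -
    have "\<exists>z. \<forall>x. cinner y (T x) = cinner z x"
    proof (rule riesz_representation[where K = "norm y * onorm T"])
      show "cinner y (T (x + x')) = cinner y (T x) + cinner y (T x')" for x x'
        by (simp add: bop_add[OF T] cinner_add_right)
      show "cinner y (T (scaleC c x)) = c * cinner y (T x)" for c x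
        by (simp add: bop_scaleC[OF T] cinner_scaleC_right)
      show "cmod (cinner y (T x)) \<le> norm y * onorm T * norm x" for x
        using norm_cinner_le[of y "T x"] mult_left_mono[OF norm_bop_le[OF T, of x] norm_ge_zero[of y]]
        by (simp add: mult.assoc)
    qed
    then obtain z where "\<forall>x. cinner y (T x) = cinner z x" by blast
    then have "\<forall>x. cinner (T x) y = cinner x z" by (metis cinner_commute)
    then show ?thesis by blast
  qed
  then show ?thesis by metis
qed

lemma cinner_adj_right:
  fixes T :: "'a::chilbert \<Rightarrow> 'a"
  assumes T: "bop T"
  shows "cinner (T x) y = cinner x (adj T y)"
proof -
  have ex1: "\<exists>!S. \<forall>x y. cinner (T x) y = cinner x (S y)"
  proof -
    obtain S where S: "\<forall>x y. cinner (T x) y = cinner x (S y)" using adj_exists[OF T] by blast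
    moreover have "S' = S" if "\<forall>x y. cinner (T x) y = cinner x (S' y)" for S'
    proof
      fix y show "S' y = S y" by (rule cinner_ext) (use that S in metis)
    qed
    ultimately show ?thesis by blast
  qed
  show ?thesis unfolding adj_def using theI'[OF ex1] by blast
qed

lemma cinner_adj_left:
  fixes T :: "'a::chilbert \<Rightarrow> 'a"
  assumes T: "bop T"
  shows "cinner (adj T x) y = cinner x (T y)"
proof -
  have "cinner (adj T x) y = cnj (cinner y (adj T x))" by (rule cinner_commute)
  also have "\<dots> = cnj (cinner (T y) x)" by (simp add: cinner_adj_right[OF T])
  also have "\<dots> = cinner x (T y)" by (simp add: cinner_cnj_sym)
  finally show ?thesis .
qed

lemma norm_adj_le:
  fixes T :: "'a::chilbert \<Rightarrow> 'a"
  assumes T: "bop T"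
  shows "norm (adj T y) \<le> onorm T * norm y"
proof -
  have "(norm (adj T y))\<^sup>2 = Re (cinner (adj T y) (adj T y))" by (simp add: Re_cinner_self)
  also have "\<dots> = Re (cinner (T (adj T y)) y)" by (simp add: cinner_adj_right[OF T])
  also have "\<dots> \<le> norm (T (adj T y)) * norm y" by (rule Re_cinner_le)
  also have "\<dots> \<le> onorm T * norm (adj T y) * norm y"
    by (rule mult_right_mono[OF norm_bop_le[OF T]]) simp
  finally have *: "norm (adj T y) * norm (adj T y) \<le> (onorm T * norm y) * norm (adj T y)"
    by (simp add: power2_eq_square mult_ac)
  show ?thesis
  proof (cases "norm (adj T y) = 0")
    case True then show ?thesis using onorm_bop_nonneg[OF T] by simp
  next
    case False then have "0 < norm (adj T y)" by simp
    with * show ?thesis using mult_le_cancel_right_pos by blast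
  qed
qed

lemma bop_adj:
  fixes T :: "'a::chilbert \<Rightarrow> 'a"
  assumes T: "bop T"
  shows "bop (adj T)"
proof (rule bopI[where K = "onorm T"])
  show "adj T (x + y) = adj T x + adj T y" for x y
    by (rule cinner_ext) (simp add: cinner_adj_right[OF T, symmetric] cinner_add_right)
  show "adj T (scaleC c x) = scaleC c (adj T x)" for c x
    by (rule cinner_ext) (simp add: cinner_adj_right[OF T, symmetric] cinner_scaleC_right)
  show "norm (adj T y) \<le> onorm T * norm y" for y by (rule norm_adj_le[OF T])
qed

lemma adj_adj:
  fixes T :: "'a::chilbert \<Rightarrow> 'a"
  assumes T: "bop T"
  shows "adj (adj T) = T"
proof
  fix y
  show "adj (adj T) y = T y"
    by (rule cinner_ext) (simp add: cinner_adj_right[OF bop_adj[OF T], symmetric] cinner_adj_left[OF T])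
qed

lemma onorm_adj:
  fixes T :: "'a::chilbert \<Rightarrow> 'a"
  assumes T: "bop T"
  shows "onorm (adj T) = onorm T"
proof -
  have le: "onorm (adj S) \<le> onorm S" if "bop S" for S :: "'a \<Rightarrow> 'a"
    by (rule onorm_bound[OF onorm_bop_nonneg[OF that] norm_adj_le[OF that]])
  show ?thesis using le[OF T] le[OF bop_adj[OF T]] by (simp add: adj_adj[OF T])
qed

section \<open>Polynomials in an operator\<close>

lemma poly_op_upto:
  assumes "degree p \<le> N"
  shows "poly_op p T x = (\<Sum>i\<le>N. coeff p i *\<^sub>R (T ^^ i) x)"
  unfolding poly_op_def
  by (rule sum.mono_neutral_left) (use assms in \<open>auto simp: coeff_eq_0\<close>)

lemma poly_op_zero [simp]: "poly_op 0 T x = 0"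
  by (simp add: poly_op_def)

lemma poly_op_pCons:
  assumes T: "bop T"
  shows "poly_op (pCons c p) T x = c *\<^sub>R x + T (poly_op p T x)"
proof -
  have "poly_op (pCons c p) T x = (\<Sum>i\<le>Suc (degree p). coeff (pCons c p) i *\<^sub>R (T ^^ i) x)"
    by (rule poly_op_upto) (simp add: degree_pCons_le)
  also have "\<dots> = c *\<^sub>R x + (\<Sum>i\<le>degree p. coeff p i *\<^sub>R (T ^^ Suc i) x)"
    unfolding sum.atMost_Suc_shift by simp
  also have "(\<Sum>i\<le>degree p. coeff p i *\<^sub>R (T ^^ Suc i) x) = T (poly_op p T x)"
    by (simp add: poly_op_def bop_sum[OF T] bop_scaleR[OF T])
  finally show ?thesis .
qed

lemma poly_op_add: "poly_op (p + q) T x = poly_op p T x + poly_op q T x"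
proof -
  define N where "N = degree p + degree q"
  have "poly_op (p + q) T x = (\<Sum>i\<le>N. coeff (p + q) i *\<^sub>R (T ^^ i) x)"
    by (rule poly_op_upto) (simp add: N_def degree_add_le)
  also have "\<dots> = (\<Sum>i\<le>N. coeff p i *\<^sub>R (T ^^ i) x) + (\<Sum>i\<le>N. coeff q i *\<^sub>R (T ^^ i) x)"
    by (simp add: scaleR_add_left sum.distrib)
  also have "\<dots> = poly_op p T x + poly_op q T x"
    using poly_op_upto[of p N T x] poly_op_upto[of q N T x] by (simp add: N_def)
  finally show ?thesis .
qed

lemma poly_op_smult: "poly_op (smult c p) T x = c *\<^sub>R poly_op p T x"
proof -
  have "poly_op (smult c p) T x = (\<Sum>i\<le>degree p. coeff (smult c p) i *\<^sub>R (T ^^ i) x)"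
    by (rule poly_op_upto) (rule degree_smult_le)
  also have "\<dots> = c *\<^sub>R poly_op p T x"
    by (simp add: poly_op_def scaleR_sum_right)
  finally show ?thesis .
qed

lemma poly_op_minus: "poly_op (- p) T x = - poly_op p T x"
  using poly_op_smult[of "-1" p T x] by simp

lemma poly_op_diff: "poly_op (p - q) T x = poly_op p T x - poly_op q T x"
  using poly_op_add[of p "- q" T x] poly_op_minus[of q T x] by simp

lemma poly_op_const: "poly_op [:c:] T x = c *\<^sub>R x"
  by (simp add: poly_op_def)

lemma poly_op_X: "bop T \<Longrightarrow> poly_op [:0, 1:] T x = T x"
  by (simp add: poly_op_pCons poly_op_const)

lemma poly_op_bop:
  assumes T: "bop T"
  shows "bop (poly_op p T)"
proof (induction p)
  case 0
  have "poly_op 0 T = (\<lambda>x. 0 *\<^sub>R x)" by (rule ext) simp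
  then show ?case using bop_scaleR_id[of 0] by simp
next
  case (pCons a p)
  have "poly_op (pCons a p) T = (\<lambda>x. a *\<^sub>R x + T (poly_op p T x))"
    by (rule ext) (simp add: poly_op_pCons[OF T])
  moreover have "bop (\<lambda>x. a *\<^sub>R x + T (poly_op p T x))"
    by (rule bop_add_op[OF bop_scaleR_id bop_compose[OF T pCons.IH]])
  ultimately show ?case by simp
qed

lemma poly_op_mult:
  assumes T: "bop T"
  shows "poly_op (p * q) T x = poly_op p T (poly_op q T x)"
proof (induction p)
  case 0 then show ?case by simp
next
  case (pCons a p)
  have "poly_op (pCons a p * q) T x = poly_op (smult a q + pCons 0 (p * q)) T x"
    by (simp only: mult_pCons_left)
  also have "\<dots> = a *\<^sub>R poly_op q T x + (0 *\<^sub>R x + T (poly_op (p * q) T x))"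
    by (simp only: poly_op_add poly_op_smult poly_op_pCons[OF T])
  also have "\<dots> = poly_op (pCons a p) T (poly_op q T x)"
    by (simp add: poly_op_pCons[OF T] pCons.IH)
  finally show ?case .
qed

lemma poly_op_commute:
  assumes T: "bop T"
  shows "poly_op p T (T x) = T (poly_op p T x)"
proof -
  have "poly_op p T (T x) = poly_op p T (poly_op [:0,1:] T x)" by (simp add: poly_op_X[OF T])
  also have "\<dots> = poly_op (p * [:0,1:]) T x" by (simp only: poly_op_mult[OF T])
  also have "\<dots> = poly_op ([:0,1:] * p) T x" by (simp only: mult.commute)
  also have "\<dots> = poly_op [:0,1:] T (poly_op p T x)" by (simp only: poly_op_mult[OF T])
  also have "\<dots> = T (poly_op p T x)" by (simp only: poly_op_X[OF T])
  finally show ?thesis .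
qed

lemma poly_op_hermitian:
  assumes T: "bop T" and H: "hermitian T"
  shows "hermitian (poly_op p T)"
proof (induction p)
  case 0 then show ?case by (simp add: hermitian_def)
next
  case (pCons a p)
  show ?case unfolding hermitian_def
  proof (intro allI)
    fix x y
    have "cinner x (T (poly_op p T y)) = cinner (T x) (poly_op p T y)" by (rule hermitianD[OF H])
    also have "\<dots> = cinner (poly_op p T (T x)) y" by (rule hermitianD[OF pCons.IH])
    also have "\<dots> = cinner (T (poly_op p T x)) y" by (simp add: poly_op_commute[OF T])
    finally show "cinner x (poly_op (pCons a p) T y) = cinner (poly_op (pCons a p) T x) y"
      by (simp add: poly_op_pCons[OF T] cinner_add_left cinner_add_right cinner_scaleR_left cinner_scaleR_right)
  qed
qed

definition poly_opC :: "complex poly \<Rightarrow> ('a::complex_inner \<Rightarrow> 'a) \<Rightarrow> 'a \<Rightarrow> 'a" where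
  "poly_opC p T = (\<lambda>x. \<Sum>i\<le>degree p. scaleC (coeff p i) ((T ^^ i) x))"

lemma scaleC_sum: "scaleC c (sum f A) = (\<Sum>i\<in>A. scaleC c (f i :: 'a::complex_inner))"
  by (induction A rule: infinite_finite_induct) (auto simp: scaleC_add_right)

lemma poly_opC_upto:
  assumes "degree p \<le> N"
  shows "poly_opC p T x = (\<Sum>i\<le>N. scaleC (coeff p i) ((T ^^ i) x))"
  unfolding poly_opC_def
  by (rule sum.mono_neutral_left) (use assms in \<open>auto simp: coeff_eq_0\<close>)

lemma poly_opC_zero [simp]: "poly_opC 0 T x = 0"
  by (simp add: poly_opC_def)

lemma poly_opC_pCons:
  assumes T: "bop T"
  shows "poly_opC (pCons c p) T x = scaleC c x + T (poly_opC p T x)"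
proof -
  have "poly_opC (pCons c p) T x = (\<Sum>i\<le>Suc (degree p). scaleC (coeff (pCons c p) i) ((T ^^ i) x))"
    by (rule poly_opC_upto) (simp add: degree_pCons_le)
  also have "\<dots> = scaleC c x + (\<Sum>i\<le>degree p. scaleC (coeff p i) ((T ^^ Suc i) x))"
    unfolding sum.atMost_Suc_shift by simp
  also have "(\<Sum>i\<le>degree p. scaleC (coeff p i) ((T ^^ Suc i) x)) = T (poly_opC p T x)"
    by (simp add: poly_opC_def bop_sum[OF T] bop_scaleC[OF T])
  finally show ?thesis .
qed

lemma poly_opC_add: "poly_opC (p + q) T x = poly_opC p T x + poly_opC q T x"
proof -
  define N where "N = degree p + degree q"
  have "poly_opC (p + q) T x = (\<Sum>i\<le>N. scaleC (coeff (p + q) i) ((T ^^ i) x))"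
    by (rule poly_opC_upto) (simp add: N_def degree_add_le)
  also have "\<dots> = (\<Sum>i\<le>N. scaleC (coeff p i) ((T ^^ i) x)) + (\<Sum>i\<le>N. scaleC (coeff q i) ((T ^^ i) x))"
    by (simp add: scaleC_add_left sum.distrib)
  also have "\<dots> = poly_opC p T x + poly_opC q T x"
    using poly_opC_upto[of p N T x] poly_opC_upto[of q N T x] by (simp add: N_def)
  finally show ?thesis .
qed

lemma poly_opC_smult: "poly_opC (smult c p) T x = scaleC c (poly_opC p T x)"
proof -
  have "poly_opC (smult c p) T x = (\<Sum>i\<le>degree p. scaleC (coeff (smult c p) i) ((T ^^ i) x))"
    by (rule poly_opC_upto) (rule degree_smult_le)
  also have "\<dots> = scaleC c (poly_opC p T x)"
    by (simp add: poly_opC_def scaleC_sum scaleC_scaleC)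
  finally show ?thesis .
qed

lemma poly_opC_mult:
  assumes T: "bop T"
  shows "poly_opC (p * q) T x = poly_opC p T (poly_opC q T x)"
proof (induction p)
  case 0 then show ?case by simp
next
  case (pCons a p)
  have "poly_opC (pCons a p * q) T x = poly_opC (smult a q + pCons 0 (p * q)) T x"
    by (simp only: mult_pCons_left)
  also have "\<dots> = scaleC a (poly_opC q T x) + (scaleC 0 x + T (poly_opC (p * q) T x))"
    by (simp only: poly_opC_add poly_opC_smult poly_opC_pCons[OF T])
  also have "\<dots> = poly_opC (pCons a p) T (poly_opC q T x)"
    by (simp add: poly_opC_pCons[OF T] pCons.IH)
  finally show ?case .
qed

lemma poly_opC_of_real: "poly_opC (map_poly complex_of_real p) T x = poly_op p T x"
proof -
  have "poly_opC (map_poly complex_of_real p) T x =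
      (\<Sum>i\<le>degree p. scaleC (coeff (map_poly complex_of_real p) i) ((T ^^ i) x))"
    by (rule poly_opC_upto) (simp add: degree_map_poly)
  also have "\<dots> = poly_op p T x"
    by (simp add: poly_op_def coeff_map_poly scaleC_of_real)
  finally show ?thesis .
qed

section \<open>Positivity of polynomials in a positive operator\<close>

definition bounded_below :: "('a::complex_inner \<Rightarrow> 'a) \<Rightarrow> real \<Rightarrow> bool" where
  "bounded_below T d \<longleftrightarrow> 0 < d \<and> (\<forall>x. d * norm x \<le> norm (T x))"

lemma bounded_below_comp:
  assumes "bounded_below T a" "bounded_below S b"
  shows "bounded_below (\<lambda>x. T (S x)) (a * b)"
  unfolding bounded_below_def
proof (intro conjI allI)
  show "0 < a * b" using assms by (simp add: bounded_below_def)
  fix x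
  have "a * (b * norm x) \<le> a * norm (S x)"
    using assms by (intro mult_left_mono) (auto simp: bounded_below_def)
  also have "\<dots> \<le> norm (T (S x))" using assms by (simp add: bounded_below_def)
  finally show "a * b * norm x \<le> norm (T (S x))" by (simp add: mult.assoc)
qed

lemma norm_lower_bound_Re_cinner:
  assumes "0 < d" and "d * (norm x)\<^sup>2 \<le> Re (cinner x w)"
  shows "d * norm x \<le> norm (w::'a::complex_inner)"
proof (cases "x = 0")
  case True then show ?thesis by simp
next
  case False
  have "d * norm x * norm x \<le> norm w * norm x"
    using assms(2) Re_cinner_le[of x w] by (simp add: power2_eq_square mult_ac)
  then show ?thesis using False by (simp add: mult_le_cancel_right)
qed

lemma bounded_below_nonreal_shift:
  fixes T :: "'a::complex_inner \<Rightarrow> 'a"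
  assumes H: "hermitian T" and r: "Im r \<noteq> 0"
  shows "bounded_below (\<lambda>x. scaleC (- r) x + T x) \<bar>Im r\<bar>"
  unfolding bounded_below_def
proof (intro conjI allI)
  show "0 < \<bar>Im r\<bar>" using r by simp
  fix x
  define v where "v = T x - Re r *\<^sub>R x"
  define y where "y = scaleC (\<i> * complex_of_real (Im r)) x"
  have "scaleC r x = scaleC (complex_of_real (Re r)) x + y"
    unfolding y_def by (subst complex_eq[of r]) (rule scaleC_add_left)
  then have eq: "scaleC (- r) x + T x = v - y"
    by (simp add: v_def scaleC_minus_left scaleC_of_real algebra_simps)
  have "cinner v x = complex_of_real (Re (cinner x (T x)) - Re r * (norm x)\<^sup>2)"
    by (simp add: v_def cinner_diff_left cinner_scaleR_left hermitian_cinner_left_of_real[OF H] cinner_self)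
  then have "Re (cinner v y) = 0" by (simp add: y_def cinner_scaleC_right)
  then have "(norm y)\<^sup>2 \<le> (norm (v - y))\<^sup>2" by (simp add: norm_diff_sq)
  then have "norm y \<le> norm (v - y)" by (rule power2_le_imp_le) simp
  moreover have "norm y = \<bar>Im r\<bar> * norm x" by (simp add: y_def norm_scaleC norm_mult)
  ultimately show "\<bar>Im r\<bar> * norm x \<le> norm (scaleC (- r) x + T x)" by (simp add: eq)
qed

lemma bounded_below_real_shift:
  fixes T :: "'a::complex_inner \<Rightarrow> 'a"
  assumes P: "pos_op T" and Ta: "onorm T \<le> a" and r: "r < 0 \<or> a < r"
  shows "\<exists>d. bounded_below (\<lambda>x. (- r) *\<^sub>R x + T x) d"
proof -
  have B: "bop T" using P by (rule pos_op_bop)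
  have Re_Tx: "0 \<le> Re (cinner x (T x))" "Re (cinner x (T x)) \<le> a * (norm x)\<^sup>2" for x
  proof -
    show "0 \<le> Re (cinner x (T x))" by (rule pos_opD[OF P])
    have "Re (cinner x (T x)) \<le> norm x * norm (T x)" by (rule Re_cinner_le)
    also have "\<dots> \<le> norm x * (onorm T * norm x)" by (rule mult_left_mono[OF norm_bop_le[OF B]]) simp
    also have "\<dots> \<le> norm x * (a * norm x)" by (intro mult_left_mono mult_right_mono Ta) simp_all
    finally show "Re (cinner x (T x)) \<le> a * (norm x)\<^sup>2" by (simp add: power2_eq_square mult_ac)
  qed
  show ?thesis
  proof (cases "r < 0")
    case True
    have "bounded_below (\<lambda>x. (- r) *\<^sub>R x + T x) (- r)"
      unfolding bounded_below_def
    proof (intro conjI allI)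
      show "0 < - r" using True by simp
      show "- r * norm x \<le> norm ((- r) *\<^sub>R x + T x)" for x
        by (rule norm_lower_bound_Re_cinner) (use True Re_Tx(1)[of x] in
            \<open>simp_all add: cinner_add_right cinner_diff_right cinner_scaleR_right Re_cinner_self\<close>)
    qed
    then show ?thesis by blast
  next
    case False
    with r have ra: "a < r" by simp
    have "bounded_below (\<lambda>x. (- r) *\<^sub>R x + T x) (r - a)"
      unfolding bounded_below_def
    proof (intro conjI allI)
      show "0 < r - a" using ra by simp
      fix x
      have "(r - a) * norm x \<le> norm (- ((- r) *\<^sub>R x + T x))"
        by (rule norm_lower_bound_Re_cinner) (use ra Re_Tx(2)[of x] in
            \<open>simp_all add: cinner_minus_right cinner_add_right cinner_diff_right cinner_scaleR_right Re_cinner_self algebra_simps\<close>)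
      then show "(r - a) * norm x \<le> norm ((- r) *\<^sub>R x + T x)" by (simp only: norm_minus_cancel)
    qed
    then show ?thesis by blast
  qed
qed

lemma bounded_below_linear_factor:
  fixes T :: "'a::complex_inner \<Rightarrow> 'a"
  assumes P: "pos_op T" and Ta: "onorm T \<le> a"
    and r: "\<not> (Im r = 0 \<and> 0 \<le> Re r \<and> Re r \<le> a)"
  shows "\<exists>d. bounded_below (\<lambda>x. scaleC (- r) x + T x) d"
proof (cases "Im r = 0")
  case False
  then show ?thesis using bounded_below_nonreal_shift[OF pos_op_hermitian[OF P]] by blast
next
  case True
  then have sc: "scaleC (- r) x = (- Re r) *\<^sub>R x" for x
    by (subst complex_eq[of r]) (simp add: scaleC_of_real[symmetric])
  have eq: "(\<lambda>x. scaleC (- r) x + T x) = (\<lambda>x. (- Re r) *\<^sub>R x + T x)" by (intro ext) (simp only: sc)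
  show ?thesis unfolding eq by (rule bounded_below_real_shift[OF P Ta]) (use r True in auto)
qed

lemma poly_opC_linear:
  assumes B: "bop T" shows "poly_opC [:- z, 1:] T x = scaleC (- z) x + T x"
  by (simp add: poly_opC_pCons[OF B] scaleC_one bop_zero[OF B])

text \<open>Factor \<open>q\<close> into linear factors over \<open>\<complex>\<close>; each factor \<open>T - z\<close> is bounded below since
  \<open>z\<close> lies off the segment \<open>[0, a]\<close> containing the numerical range of \<open>T\<close>.\<close>
lemma bounded_below_poly_opC:
  fixes T :: "'a::complex_inner \<Rightarrow> 'a"
  assumes P: "pos_op T" and Ta: "onorm T \<le> a"
  shows "q \<noteq> 0 \<Longrightarrow> (\<And>z. poly q z = 0 \<Longrightarrow> \<not> (Im z = 0 \<and> 0 \<le> Re z \<and> Re z \<le> a))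
          \<Longrightarrow> \<exists>d. bounded_below (poly_opC q T) d"
proof (induction "degree q" arbitrary: q rule: less_induct)
  case less
  have B: "bop T" using P by (rule pos_op_bop)
  show ?case
  proof (cases "degree q = 0")
    case True
    define c where "c = coeff q 0"
    have qc: "q = [:c:]" using degree_0_id[OF True] by (simp add: c_def)
    have c0: "c \<noteq> 0" using less.prems(1) qc by simp
    have "bounded_below (poly_opC q T) (cmod c)"
      unfolding bounded_below_def using c0 by (simp add: qc poly_opC_def norm_scaleC)
    then show ?thesis by blast
  next
    case False
    then have "\<not> constant (poly q)" by (simp add: constant_degree)
    then obtain z where z: "poly q z = 0" using fundamental_theorem_of_algebra by blast
    then have "[:- z, 1:] dvd q" by (simp add: poly_eq_0_iff_dvd)
    then obtain q' where q': "q = [:- z, 1:] * q'" by (rule dvdE)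
    have q'0: "q' \<noteq> 0" using less.prems(1) q' by auto
    have "degree q = degree [:- z, 1:] + degree q'"
      unfolding q' by (rule degree_mult_eq) (simp_all add: q'0)
    then have dq: "degree q = Suc (degree q')" by simp
    have "\<exists>d. bounded_below (poly_opC q' T) d"
    proof (rule less.hyps)
      show "degree q' < degree q" using dq by simp
      show "q' \<noteq> 0" by (rule q'0)
      fix w assume "poly q' w = 0"
      then have "poly q w = 0" by (simp add: q')
      then show "\<not> (Im w = 0 \<and> 0 \<le> Re w \<and> Re w \<le> a)" by (rule less.prems(2))
    qed
    then obtain d2 where d2: "bounded_below (poly_opC q' T) d2" by blast
    obtain d1 where d1: "bounded_below (\<lambda>x. scaleC (- z) x + T x) d1"
      using bounded_below_linear_factor[OF P Ta less.prems(2)[OF z]] by blast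
    have "bounded_below (\<lambda>x. scaleC (- z) (poly_opC q' T x) + T (poly_opC q' T x)) (d1 * d2)"
      using bounded_below_comp[OF d1 d2] by simp
    moreover have "poly_opC q T = (\<lambda>x. scaleC (- z) (poly_opC q' T x) + T (poly_opC q' T x))"
      by (rule ext) (simp only: q' poly_opC_mult[OF B] poly_opC_linear[OF B])
    ultimately show ?thesis by auto
  qed
qed

lemma Re_cinner_apply_scaleR:
  assumes "bop D"
  shows "Re (cinner (c *\<^sub>R x) (D (c *\<^sub>R x))) = c\<^sup>2 * Re (cinner x (D x))"
  by (simp add: bop_scaleR[OF assms] cinner_scaleR_left cinner_scaleR_right power2_eq_square)

lemma pos_op_shift_below_numerical_range:
  fixes D :: "'a::complex_inner \<Rightarrow> 'a"
  assumes B: "bop D" and H: "hermitian D" and m: "\<And>x. norm x = 1 \<Longrightarrow> m \<le> Re (cinner x (D x))"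
  shows "pos_op (\<lambda>x. D x - m *\<^sub>R x)"
  unfolding pos_op_def
proof (intro conjI allI)
  show "bop (\<lambda>x. D x - m *\<^sub>R x)" by (rule bop_diff_op[OF B bop_scaleR_id])
  fix x
  show "Im (cinner x (D x - m *\<^sub>R x)) = 0"
    by (simp add: cinner_diff_right cinner_scaleR_right hermitian_Im_cinner[OF H] cinner_self)
  show "0 \<le> Re (cinner x (D x - m *\<^sub>R x))"
  proof (cases "x = 0")
    case True then show ?thesis by (simp add: bop_zero[OF B])
  next
    case False
    have "m \<le> Re (cinner ((1 / norm x) *\<^sub>R x) (D ((1 / norm x) *\<^sub>R x)))" using False by (intro m) simp
    then have "m \<le> (1 / norm x)\<^sup>2 * Re (cinner x (D x))" by (simp only: Re_cinner_apply_scaleR[OF B])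
    then have "m * (norm x)\<^sup>2 \<le> Re (cinner x (D x))" using False by (simp add: field_simps power2_eq_square)
    then show ?thesis by (simp add: cinner_diff_right cinner_scaleR_right Re_cinner_self)
  qed
qed

lemma norm_pos_op_less_if_Re_cinner_small:
  fixes P :: "'a::complex_inner \<Rightarrow> 'a"
  assumes P: "pos_op P" and e: "0 < e" and x: "Re (cinner x (P x)) < e\<^sup>2 / (onorm P + 1)"
  shows "norm (P x) < e"
proof -
  have op0: "0 \<le> onorm P" by (rule onorm_bop_nonneg[OF pos_op_bop[OF P]])
  have "(norm (P x))\<^sup>2 \<le> onorm P * Re (cinner x (P x))" by (rule norm_sq_le_onorm_cinner_pos_op[OF P])
  also have "\<dots> \<le> onorm P * (e\<^sup>2 / (onorm P + 1))" using x op0 by (intro mult_left_mono) auto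
  also have "\<dots> = e\<^sup>2 * (onorm P / (onorm P + 1))" by simp
  also have "\<dots> < e\<^sup>2 * 1" using op0 e by (intro mult_strict_left_mono) auto
  finally show ?thesis using e by (simp add: power_less_imp_less_base)
qed

lemma approx_eigenvalue_inf_numerical_range:
  fixes D :: "'a::complex_inner \<Rightarrow> 'a"
  assumes B: "bop D" and H: "hermitian D" and z: "Re (cinner z (D z)) < 0"
  shows "\<exists>m<0. \<forall>e>0. \<exists>x. norm x = 1 \<and> norm (D x - m *\<^sub>R x) < e"
proof -
  define R where "R = (\<lambda>x. Re (cinner x (D x))) ` {x. norm x = 1}"
  define m where "m = Inf R"
  have z0: "z \<noteq> 0" using z by auto
  define u where "u = (1 / norm z) *\<^sub>R z"
  have u1: "norm u = 1" using z0 by (simp add: u_def)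
  have "Re (cinner u (D u)) = (1 / norm z)\<^sup>2 * Re (cinner z (D z))"
    unfolding u_def by (rule Re_cinner_apply_scaleR[OF B])
  then have uneg: "Re (cinner u (D u)) < 0" using z z0 by (simp add: mult_pos_neg)
  have Rne: "R \<noteq> {}" using u1 by (auto simp: R_def)
  have Rbd: "bdd_below R"
  proof (rule bdd_belowI[of _ "- onorm D"])
    fix t assume "t \<in> R"
    then obtain x where x: "norm x = 1" "t = Re (cinner x (D x))" by (auto simp: R_def)
    have "- Re (cinner x (D x)) \<le> norm x * norm (D x)"
      using Re_cinner_le[of x "- D x"] by (simp add: cinner_minus_right)
    also have "\<dots> \<le> onorm D" using norm_bop_le[OF B, of x] x by simp
    finally show "- onorm D \<le> t" using x by simp
  qed
  have mle: "m \<le> Re (cinner x (D x))" if "norm x = 1" for x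
    unfolding m_def by (rule cInf_lower) (use that Rbd in \<open>auto simp: R_def\<close>)
  have PP: "pos_op (\<lambda>x. D x - m *\<^sub>R x)" by (rule pos_op_shift_below_numerical_range[OF B H mle])
  show ?thesis
  proof (intro exI[of _ m] conjI allI impI)
    show "m < 0" using mle[OF u1] uneg by simp
    fix e :: real assume e: "0 < e"
    have "0 < e\<^sup>2 / (onorm (\<lambda>x. D x - m *\<^sub>R x) + 1)"
      using e onorm_bop_nonneg[OF pos_op_bop[OF PP]] by simp
    then have "Inf R < m + e\<^sup>2 / (onorm (\<lambda>x. D x - m *\<^sub>R x) + 1)" by (simp add: m_def)
    then obtain x where x: "norm x = 1" "Re (cinner x (D x)) < m + e\<^sup>2 / (onorm (\<lambda>x. D x - m *\<^sub>R x) + 1)"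
      using cInf_lessD[OF Rne] by (auto simp: R_def)
    then have "norm (D x - m *\<^sub>R x) < e"
      by (intro norm_pos_op_less_if_Re_cinner_small[OF PP e, simplified])
         (simp add: cinner_diff_right cinner_scaleR_right Re_cinner_self)
    then show "\<exists>x. norm x = 1 \<and> norm (D x - m *\<^sub>R x) < e" using x(1) by blast
  qed
qed

lemma poly_map_poly_of_real: "poly (map_poly complex_of_real p) (complex_of_real t) = complex_of_real (poly p t)"
  by (induction p) (auto simp: map_poly_pCons)

text \<open>If \<open>p(T)\<close> took a negative value, the bottom \<open>m < 0\<close> of its numerical range would be an
  approximate eigenvalue of \<open>p(T)\<close>, although \<open>p - m\<close> has no roots in \<open>[0, a]\<close>.\<close>
lemma pos_op_poly_op:
  fixes T :: "'a::complex_inner \<Rightarrow> 'a"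
  assumes P: "pos_op T" and Ta: "onorm T \<le> a"
    and pnn: "\<And>t. 0 \<le> t \<Longrightarrow> t \<le> a \<Longrightarrow> 0 \<le> poly p t"
  shows "pos_op (poly_op p T)"
proof -
  have B: "bop T" using P by (rule pos_op_bop)
  have H: "hermitian T" using P by (rule pos_op_hermitian)
  define S where "S = poly_op p T"
  have SB: "bop S" unfolding S_def by (rule poly_op_bop[OF B])
  have SH: "hermitian S" unfolding S_def by (rule poly_op_hermitian[OF B H])
  have a0: "0 \<le> a" using onorm_bop_nonneg[OF B] Ta by simp
  have "0 \<le> Re (cinner x (S x))" for x
  proof (rule ccontr)
    assume "\<not> 0 \<le> Re (cinner x (S x))"
    then have neg: "Re (cinner x (S x)) < 0" by simp
    obtain m where m: "m < 0" and ap: "\<And>e. e > 0 \<Longrightarrow> \<exists>x. norm x = 1 \<and> norm (S x - m *\<^sub>R x) < e"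
      using approx_eigenvalue_inf_numerical_range[OF SB SH neg] by blast
    define q where "q = map_poly complex_of_real (p - [:m:])"
    have roots: "\<not> (Im z = 0 \<and> 0 \<le> Re z \<and> Re z \<le> a)" if "poly q z = 0" for z
    proof
      assume z: "Im z = 0 \<and> 0 \<le> Re z \<and> Re z \<le> a"
      then have "z = complex_of_real (Re z)" by (simp add: complex_eq_iff)
      then have "complex_of_real (poly (p - [:m:]) (Re z)) = 0"
        using that by (metis q_def poly_map_poly_of_real)
      then have "poly p (Re z) = m" by simp
      then show False using pnn[of "Re z"] z m by simp
    qed
    have q0: "q \<noteq> 0"
    proof
      assume "q = 0"
      then have "poly q 0 = 0" by simp
      then show False using roots[of 0] a0 by simp
    qed
    obtain d where d: "bounded_below (poly_opC q T) d" using bounded_below_poly_opC[OF P Ta q0 roots] by blast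
    have qS: "poly_opC q T y = S y - m *\<^sub>R y" for y
      by (simp add: q_def poly_opC_of_real poly_op_diff poly_op_const S_def)
    obtain y where y: "norm y = 1" "norm (S y - m *\<^sub>R y) < d" using ap d by (auto simp: bounded_below_def)
    have "d * norm y \<le> norm (poly_opC q T y)" using d by (simp add: bounded_below_def)
    then show False using y qS by simp
  qed
  then show ?thesis
    unfolding pos_op_def using SB hermitian_Im_cinner[OF SH] by (simp add: S_def)
qed

lemma norm_poly_op_le:
  fixes T :: "'a::complex_inner \<Rightarrow> 'a"
  assumes P: "pos_op T" and Ta: "onorm T \<le> a"
    and pb: "\<And>t. 0 \<le> t \<Longrightarrow> t \<le> a \<Longrightarrow> \<bar>poly p t\<bar> \<le> M"
  shows "norm (poly_op p T x) \<le> M * norm x"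
proof -
  have B: "bop T" using P by (rule pos_op_bop)
  have H: "hermitian T" using P by (rule pos_op_hermitian)
  have a0: "0 \<le> a" using onorm_bop_nonneg[OF B] Ta by simp
  have M0: "0 \<le> M" using pb[of 0] a0 by simp
  define q where "q = [:M\<^sup>2:] - p * p"
  have "pos_op (poly_op q T)"
  proof (rule pos_op_poly_op[OF P Ta])
    fix t :: real assume "0 \<le> t" "t \<le> a"
    then have pt: "\<bar>poly p t\<bar> \<le> M" by (rule pb)
    have "(poly p t)\<^sup>2 \<le> M\<^sup>2" using power_mono[OF pt abs_ge_zero, of 2] by simp
    then show "0 \<le> poly q t" by (simp add: q_def power2_eq_square)
  qed
  then have c1: "0 \<le> Re (cinner x (poly_op q T x))" by (rule pos_opD)
  have c2: "poly_op q T x = M\<^sup>2 *\<^sub>R x - poly_op p T (poly_op p T x)"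
    unfolding q_def by (simp only: poly_op_diff poly_op_const poly_op_mult[OF B])
  have c3: "cinner x (poly_op p T (poly_op p T x)) = cinner (poly_op p T x) (poly_op p T x)"
    by (rule hermitianD[OF poly_op_hermitian[OF B H]])
  have "Re (cinner x (poly_op q T x)) = M\<^sup>2 * (norm x)\<^sup>2 - (norm (poly_op p T x))\<^sup>2"
    unfolding c2 cinner_diff_right cinner_scaleR_right c3 by (simp add: Re_cinner_self)
  then have "(norm (poly_op p T x))\<^sup>2 \<le> (M * norm x)\<^sup>2"
    using c1 by (simp add: power_mult_distrib)
  then show ?thesis by (rule power2_le_imp_le) (simp add: M0)
qed

section \<open>Continuous functional calculus\<close>

lemma Weierstrass_poly_approx:
  fixes f :: "real \<Rightarrow> real"
  assumes "continuous_on {0..a} f" and "0 < e"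
  shows "\<exists>r. \<forall>t\<in>{0..a}. \<bar>f t - poly r t\<bar> < e"
proof -
  obtain g where g: "real_polynomial_function g" "\<And>x. x \<in> {0..a} \<Longrightarrow> \<bar>f x - g x\<bar> < e"
    using Stone_Weierstrass_real_polynomial_function[OF compact_Icc assms(1) assms(2)] by blast
  obtain c N where gN: "g = (\<lambda>x. \<Sum>i\<le>N. c i * x ^ i)"
    using g(1) real_polynomial_function_iff_sum by blast
  define r where "r = (\<Sum>i\<le>N. monom (c i) i)"
  have pr: "poly r x = g x" for x by (simp add: r_def gN poly_sum poly_monom)
  have "\<forall>t\<in>{0..a}. \<bar>f t - poly r t\<bar> < e" using g(2) by (simp only: pr) blast
  then show ?thesis by blast
qed

lemma Weierstrass_poly_seq:
  fixes f :: "real \<Rightarrow> real"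
  assumes "continuous_on {0..a} f"
  shows "\<exists>p. \<forall>n. \<forall>t\<in>{0..a}. \<bar>f t - poly (p n) t\<bar> < epsn n"
proof -
  have "\<forall>n. \<exists>r. \<forall>t\<in>{0..a}. \<bar>f t - poly r t\<bar> < epsn n"
    using Weierstrass_poly_approx[OF assms] by simp
  then show ?thesis by (rule choice)
qed

lemma uniform_limit_poly_seq:
  assumes "\<And>n t. t \<in> S \<Longrightarrow> \<bar>f t - poly (p n) t\<bar> < epsn n"
  shows "uniform_limit S (\<lambda>n. poly (p n)) f sequentially"
  unfolding uniform_limit_sequentially_iff
proof (intro allI impI)
  fix e :: real assume "0 < e"
  then obtain N where N: "\<And>n. n \<ge> N \<Longrightarrow> epsn n < e" using epsn_eventually_less by blast
  show "\<exists>N. \<forall>n\<ge>N. \<forall>x\<in>S. dist (poly (p n) x) (f x) < e"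
  proof (intro exI allI impI ballI)
    fix n x assume "N \<le> n" "x \<in> S"
    then show "dist (poly (p n) x) (f x) < e"
      using assms[of x n] N[of n] by (simp add: dist_real_def abs_minus_commute)
  qed
qed

lemma uniform_Cauchy_operator_limit:
  fixes F :: "nat \<Rightarrow> 'a::real_normed_vector \<Rightarrow> 'b::{real_normed_vector, complete_space}"
  assumes cp: "\<And>n m x. norm (F n x - F m x) \<le> (epsn n + epsn m) * norm x"
  obtains S where "\<And>n x. norm (F n x - S x) \<le> epsn n * norm x"
proof -
  have "convergent (\<lambda>n. F n x)" for x
  proof -
    have "Cauchy (\<lambda>n. F n x)"
    proof (rule CauchyI)
      fix e :: real assume e: "0 < e"
      have nx: "0 < norm x + 1" by (simp add: add_nonneg_pos)
      define c where "c = e / (2 * (norm x + 1))"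
      have c0: "0 < c" using e nx by (simp add: c_def)
      have "c * (2 * (norm x + 1)) = e" using nx unfolding c_def by simp
      then have ce: "(c + c) * (norm x + 1) = e" by (simp add: algebra_simps)
      obtain N where N: "\<And>n. n \<ge> N \<Longrightarrow> epsn n < c" using epsn_eventually_less[OF c0] by blast
      show "\<exists>M. \<forall>m\<ge>M. \<forall>n\<ge>M. norm (F m x - F n x) < e"
      proof (intro exI allI impI)
        fix m n assume "N \<le> m" "N \<le> n"
        have "(epsn m + epsn n) * norm x \<le> (epsn m + epsn n) * (norm x + 1)"
          by (intro mult_left_mono) auto
        also have "\<dots> < (c + c) * (norm x + 1)"
          using N \<open>N \<le> m\<close> \<open>N \<le> n\<close> nx by (intro mult_strict_right_mono add_strict_mono) auto
        moreover have "norm (F m x - F n x) \<le> (epsn m + epsn n) * norm x" by (rule cp)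
        ultimately show "norm (F m x - F n x) < e" using ce by linarith
      qed
    qed
    then show ?thesis by (simp add: Cauchy_convergent_iff)
  qed
  then have lim: "(\<lambda>n. F n x) \<longlonglongrightarrow> lim (\<lambda>n. F n x)" for x
    by (simp add: convergent_LIMSEQ_iff)
  have "norm (F n x - lim (\<lambda>n. F n x)) \<le> epsn n * norm x" for n x
  proof (rule LIMSEQ_le)
    show "(\<lambda>m. norm (F n x - F m x)) \<longlonglongrightarrow> norm (F n x - lim (\<lambda>n. F n x))"
      by (intro tendsto_intros lim)
    show "(\<lambda>m. (epsn n + epsn m) * norm x) \<longlonglongrightarrow> epsn n * norm x"
      using tendsto_mult[OF tendsto_add[OF tendsto_const[of "epsn n"] LIMSEQ_epsn] tendsto_const[of "norm x"]]
      by simp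
    show "\<exists>N. \<forall>m\<ge>N. norm (F n x - F m x) \<le> (epsn n + epsn m) * norm x" using cp by blast
  qed
  then show ?thesis by (rule that)
qed

lemma bop_uniform_limit:
  fixes S :: "'a::complex_inner \<Rightarrow> 'a"
  assumes F: "\<And>n. bop (F n)" and lim: "\<And>n x. norm (F n x - S x) \<le> epsn n * norm x"
  shows "bop S"
proof (rule bopI[where K = "onorm (F 0) + 1"])
  fix x y
  have "norm (S (x + y) - (S x + S y)) \<le> (norm (x + y) + norm x + norm y) * epsn n" for n
  proof -
    have e: "S (x + y) - (S x + S y) = (F n x - S x) + (F n y - S y) - (F n (x + y) - S (x + y))"
      by (simp add: bop_add[OF F] algebra_simps)
    have "norm (S (x + y) - (S x + S y))
        \<le> norm (F n x - S x) + norm (F n y - S y) + norm (F n (x + y) - S (x + y))"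
      unfolding e using norm_triangle_ineq4[of "(F n x - S x) + (F n y - S y)" "F n (x + y) - S (x + y)"]
        norm_triangle_ineq[of "F n x - S x" "F n y - S y"] by linarith
    then show ?thesis using lim[of n "x + y"] lim[of n x] lim[of n y] by (simp add: algebra_simps)
  qed
  then have "norm (S (x + y) - (S x + S y)) \<le> 0" by (rule le_0_if_le_epsn)
  then show "S (x + y) = S x + S y" by simp
next
  fix c x
  have "norm (S (scaleC c x) - scaleC c (S x)) \<le> (norm (scaleC c x) + cmod c * norm x) * epsn n" for n
  proof -
    have e: "S (scaleC c x) - scaleC c (S x) = scaleC c (F n x - S x) - (F n (scaleC c x) - S (scaleC c x))"
      by (simp add: bop_scaleC[OF F] scaleC_diff_right)
    have "norm (S (scaleC c x) - scaleC c (S x))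
        \<le> cmod c * norm (F n x - S x) + norm (F n (scaleC c x) - S (scaleC c x))"
      unfolding e using norm_triangle_ineq4[of "scaleC c (F n x - S x)" "F n (scaleC c x) - S (scaleC c x)"]
        norm_scaleC[of c "F n x - S x"] by linarith
    also have "\<dots> \<le> cmod c * (epsn n * norm x) + epsn n * norm (scaleC c x)"
      by (intro add_mono lim mult_left_mono) auto
    finally show ?thesis by (simp add: algebra_simps)
  qed
  then have "norm (S (scaleC c x) - scaleC c (S x)) \<le> 0" by (rule le_0_if_le_epsn)
  then show "S (scaleC c x) = scaleC c (S x)" by simp
next
  fix x
  have "norm (S x) \<le> norm (F 0 x) + norm (F 0 x - S x)"
    using norm_triangle_sub[of "S x" "F 0 x"] by (simp add: norm_minus_commute)
  also have "\<dots> \<le> onorm (F 0) * norm x + 1 * norm x"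
    using lim[of 0 x] by (intro add_mono norm_bop_le[OF F]) simp
  finally show "norm (S x) \<le> (onorm (F 0) + 1) * norm x" by (simp add: algebra_simps)
qed

lemma onorm_poly_op_diff_tendsto:
  fixes T :: "'a::complex_inner \<Rightarrow> 'a"
  assumes P: "pos_op T" and S: "bop S"
    and p: "\<And>n t. t \<in> {0..onorm T} \<Longrightarrow> \<bar>f t - poly (p n) t\<bar> < epsn n"
    and pS: "\<And>n x. norm (poly_op (p n) T x - S x) \<le> epsn n * norm x"
    and q: "uniform_limit {0..onorm T} (\<lambda>n. poly (q n)) f sequentially"
  shows "(\<lambda>k. onorm (\<lambda>x. poly_op (q k) T x - S x)) \<longlonglongrightarrow> 0"
  unfolding LIMSEQ_iff
proof (intro allI impI)
  fix e :: real assume e: "0 < e"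
  have B: "bop T" using P by (rule pos_op_bop)
  obtain N where N: "\<And>k. k \<ge> N \<Longrightarrow> \<forall>t\<in>{0..onorm T}. dist (poly (q k) t) (f t) < e / 6"
    using q e unfolding uniform_limit_sequentially_iff by (meson divide_pos_pos zero_less_numeral)
  obtain n where n: "epsn n < e / 6" using epsn_eventually_less[of "e/6"] e by auto
  show "\<exists>N. \<forall>k\<ge>N. norm (onorm (\<lambda>x. poly_op (q k) T x - S x) - 0) < e"
  proof (intro exI allI impI)
    fix k assume k: "N \<le> k"
    have "norm (poly_op (q k) T x - S x) \<le> (e / 2) * norm x" for x
    proof -
      have "norm (poly_op (q k - p n) T x) \<le> (e / 6 + e / 6) * norm x"
      proof (rule norm_poly_op_le[OF P order_refl])
        fix t assume t: "0 \<le> t" "t \<le> onorm T"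
        then have "dist (poly (q k) t) (f t) < e / 6" using N[OF k] by auto
        moreover have "\<bar>f t - poly (p n) t\<bar> < epsn n" using p[of t n] t by simp
        ultimately show "\<bar>poly (q k - p n) t\<bar> \<le> e / 6 + e / 6"
          using n unfolding dist_real_def poly_diff by arith
      qed
      then have "norm (poly_op (q k) T x - poly_op (p n) T x) \<le> (e / 3) * norm x"
        by (simp add: poly_op_diff)
      moreover have "norm (poly_op (p n) T x - S x) \<le> (e / 6) * norm x"
        using pS[of n x] mult_right_mono[of "epsn n" "e/6" "norm x"] n by simp
      moreover have "norm (poly_op (q k) T x - S x) \<le> norm (poly_op (q k) T x - poly_op (p n) T x)
          + norm (poly_op (p n) T x - S x)" by (rule norm_diff_triangle_le) (rule order_refl)+
      ultimately show ?thesis by (simp add: algebra_simps)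
    qed
    then have "onorm (\<lambda>x. poly_op (q k) T x - S x) \<le> e / 2"
      using e by (intro onorm_bound) auto
    moreover have "0 \<le> onorm (\<lambda>x. poly_op (q k) T x - S x)"
      by (rule onorm_bop_nonneg[OF bop_diff_op[OF poly_op_bop[OF B] S]])
    ultimately show "norm (onorm (\<lambda>x. poly_op (q k) T x - S x) - 0) < e" using e by simp
  qed
qed

lemma fcalc_witness_exists:
  fixes T :: "'a::chilbert \<Rightarrow> 'a"
  assumes P: "pos_op T" and fc: "continuous_on {0..onorm T} f"
  shows "\<exists>S. bop S \<and> (\<forall>p :: nat \<Rightarrow> real poly.
        uniform_limit {0..onorm T} (\<lambda>n. poly (p n)) f sequentially \<longrightarrow>
        ((\<lambda>n. onorm (\<lambda>x. poly_op (p n) T x - S x)) \<longlonglongrightarrow> 0))"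
proof -
  have B: "bop T" using P by (rule pos_op_bop)
  obtain p where p: "\<And>n t. t \<in> {0..onorm T} \<Longrightarrow> \<bar>f t - poly (p n) t\<bar> < epsn n"
    using Weierstrass_poly_seq[OF fc] by blast
  have "norm (poly_op (p n) T x - poly_op (p m) T x) \<le> (epsn n + epsn m) * norm x" for n m x
  proof -
    have "norm (poly_op (p n - p m) T x) \<le> (epsn n + epsn m) * norm x"
    proof (rule norm_poly_op_le[OF P order_refl])
      fix t assume "0 \<le> t" "t \<le> onorm T"
      then show "\<bar>poly (p n - p m) t\<bar> \<le> epsn n + epsn m" using p[of t n] p[of t m] by simp
    qed
    then show ?thesis by (simp add: poly_op_diff)
  qed
  then obtain S where S: "\<And>n x. norm (poly_op (p n) T x - S x) \<le> epsn n * norm x"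
    by (rule uniform_Cauchy_operator_limit[of "\<lambda>n. poly_op (p n) T"]) blast
  have SB: "bop S" by (rule bop_uniform_limit[OF poly_op_bop[OF B] S])
  show ?thesis using onorm_poly_op_diff_tendsto[OF P SB p S] SB by blast
qed

lemma fcalc_spec:
  fixes T :: "'a::chilbert \<Rightarrow> 'a"
  assumes P: "pos_op T" and fc: "continuous_on {0..onorm T} f"
  shows "bop (fcalc f T) \<and> (\<forall>p :: nat \<Rightarrow> real poly.
        uniform_limit {0..onorm T} (\<lambda>n. poly (p n)) f sequentially \<longrightarrow>
        ((\<lambda>n. onorm (\<lambda>x. poly_op (p n) T x - fcalc f T x)) \<longlonglongrightarrow> 0))"
proof -
  define Q where "Q = (\<lambda>S. bop S \<and> (\<forall>p :: nat \<Rightarrow> real poly.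
        uniform_limit {0..onorm T} (\<lambda>n. poly (p n)) f sequentially \<longrightarrow>
        ((\<lambda>n. onorm (\<lambda>x. poly_op (p n) T x - S x)) \<longlonglongrightarrow> 0)))"
  have B: "bop T" using P by (rule pos_op_bop)
  have ex: "\<exists>S. Q S" unfolding Q_def by (rule fcalc_witness_exists[OF P fc])
  have un: "S1 = S2" if "Q S1" "Q S2" for S1 S2
  proof
    fix x
    obtain p where p: "\<And>n t. t \<in> {0..onorm T} \<Longrightarrow> \<bar>f t - poly (p n) t\<bar> < epsn n"
      using Weierstrass_poly_seq[OF fc] by blast
    have u: "uniform_limit {0..onorm T} (\<lambda>n. poly (p n)) f sequentially"
      by (rule uniform_limit_poly_seq) (rule p)
    have B1: "bop S1" and B2: "bop S2" using that by (auto simp: Q_def)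
    have l1: "(\<lambda>n. onorm (\<lambda>x. poly_op (p n) T x - S1 x)) \<longlonglongrightarrow> 0" using that(1) u by (auto simp: Q_def)
    have l2: "(\<lambda>n. onorm (\<lambda>x. poly_op (p n) T x - S2 x)) \<longlonglongrightarrow> 0" using that(2) u by (auto simp: Q_def)
    have "norm (S1 x - S2 x) \<le> 0"
    proof (rule LIMSEQ_le_const)
      show "(\<lambda>n. (onorm (\<lambda>x. poly_op (p n) T x - S1 x) + onorm (\<lambda>x. poly_op (p n) T x - S2 x)) * norm x)
            \<longlonglongrightarrow> 0"
        using tendsto_mult[OF tendsto_add[OF l1 l2] tendsto_const[of "norm x"]] by simp
      show "\<exists>N. \<forall>n\<ge>N. norm (S1 x - S2 x) \<le> (onorm (\<lambda>x. poly_op (p n) T x - S1 x) + onorm (\<lambda>x. poly_op (p n) T x - S2 x)) * norm x"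
      proof (intro exI allI impI)
        fix n
        have b1: "bop (\<lambda>x. poly_op (p n) T x - S1 x)" by (rule bop_diff_op[OF poly_op_bop[OF B] B1])
        have b2: "bop (\<lambda>x. poly_op (p n) T x - S2 x)" by (rule bop_diff_op[OF poly_op_bop[OF B] B2])
        have "norm (S1 x - S2 x) \<le> norm (poly_op (p n) T x - S1 x) + norm (poly_op (p n) T x - S2 x)"
          using norm_triangle_ineq4[of "poly_op (p n) T x - S2 x" "poly_op (p n) T x - S1 x"]
          by (simp add: algebra_simps)
        also have "\<dots> \<le> onorm (\<lambda>x. poly_op (p n) T x - S1 x) * norm x + onorm (\<lambda>x. poly_op (p n) T x - S2 x) * norm x"
          by (intro add_mono) (rule norm_bop_le[OF b1], rule norm_bop_le[OF b2])
        finally show "norm (S1 x - S2 x) \<le> (onorm (\<lambda>x. poly_op (p n) T x - S1 x) + onorm (\<lambda>x. poly_op (p n) T x - S2 x)) * norm x"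
          by (simp add: algebra_simps)
      qed
    qed
    then show "S1 x = S2 x" by simp
  qed
  have "\<exists>!S. Q S" using ex un by blast
  then have "Q (THE S. Q S)" by (rule theI')
  moreover have "fcalc f T = (THE S. Q S)" unfolding fcalc_def Q_def by simp
  ultimately show ?thesis by (simp add: Q_def)
qed

lemma fcalc_bop:
  fixes T :: "'a::chilbert \<Rightarrow> 'a"
  assumes P: "pos_op T" and fc: "continuous_on {0..onorm T} f"
  shows "bop (fcalc f T)"
  using fcalc_spec[OF P fc] by blast

lemma norm_poly_op_fcalc_le:
  fixes T :: "'a::chilbert \<Rightarrow> 'a"
  assumes P: "pos_op T" and fc: "continuous_on {0..onorm T} f"
    and r: "\<And>t. t \<in> {0..onorm T} \<Longrightarrow> \<bar>f t - poly r t\<bar> \<le> d"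
  shows "norm (poly_op r T x - fcalc f T x) \<le> d * norm x"
proof -
  have B: "bop T" using P by (rule pos_op_bop)
  define F where "F = fcalc f T"
  have FB: "bop F" unfolding F_def by (rule fcalc_bop[OF P fc])
  obtain p where p: "\<And>n t. t \<in> {0..onorm T} \<Longrightarrow> \<bar>f t - poly (p n) t\<bar> < epsn n"
    using Weierstrass_poly_seq[OF fc] by blast
  have u: "uniform_limit {0..onorm T} (\<lambda>n. poly (p n)) f sequentially"
    by (rule uniform_limit_poly_seq) (rule p)
  have l: "(\<lambda>n. onorm (\<lambda>x. poly_op (p n) T x - F x)) \<longlonglongrightarrow> 0"
    using fcalc_spec[OF P fc] u by (simp add: F_def)
  show ?thesis
  proof (rule LIMSEQ_le_const)
    show "(\<lambda>n. (d + epsn n) * norm x + onorm (\<lambda>x. poly_op (p n) T x - F x) * norm x) \<longlonglongrightarrow> d * norm x"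
      using tendsto_add[OF tendsto_mult[OF tendsto_add[OF tendsto_const[of d] LIMSEQ_epsn] tendsto_const[of "norm x"]]
         tendsto_mult[OF l tendsto_const[of "norm x"]]] by simp
    show "\<exists>N. \<forall>n\<ge>N. norm (poly_op r T x - fcalc f T x) \<le> (d + epsn n) * norm x + onorm (\<lambda>x. poly_op (p n) T x - F x) * norm x"
    proof (intro exI allI impI)
      fix n
      have b: "bop (\<lambda>x. poly_op (p n) T x - F x)" by (rule bop_diff_op[OF poly_op_bop[OF B] FB])
      have h1: "norm (poly_op (r - p n) T x) \<le> (d + epsn n) * norm x"
      proof (rule norm_poly_op_le[OF P order_refl])
        fix t assume "0 \<le> t" "t \<le> onorm T"
        then have "t \<in> {0..onorm T}" by simp
        then show "\<bar>poly (r - p n) t\<bar> \<le> d + epsn n" using r[of t] p[of t n] by simp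
      qed
      have "norm (poly_op r T x - F x) \<le> norm (poly_op r T x - poly_op (p n) T x) + norm (poly_op (p n) T x - F x)"
        by (rule norm_diff_triangle_le) (rule order_refl)+
      also have "\<dots> \<le> (d + epsn n) * norm x + onorm (\<lambda>x. poly_op (p n) T x - F x) * norm x"
        using h1 norm_bop_le[OF b, of x] by (simp add: poly_op_diff)
      finally show "norm (poly_op r T x - fcalc f T x) \<le> (d + epsn n) * norm x + onorm (\<lambda>x. poly_op (p n) T x - F x) * norm x"
        by (simp add: F_def)
    qed
  qed
qed

lemma Re_cinner_add_scaleR: "Re (cinner x (y + c *\<^sub>R x)) = Re (cinner x y) + c * (norm (x::'a::complex_inner))\<^sup>2"
  by (simp add: cinner_add_right cinner_scaleR_right cinner_self)

lemma Im_cinner_add_scaleR: "Im (cinner x (y + c *\<^sub>R x)) = Im (cinner x (y::'a::complex_inner))"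
  by (simp add: cinner_add_right cinner_scaleR_right cinner_self)

lemma pos_op_fcalc:
  fixes T :: "'a::chilbert \<Rightarrow> 'a"
  assumes P: "pos_op T" and fc: "continuous_on {0..onorm T} f"
    and fnn: "\<And>t. t \<in> {0..onorm T} \<Longrightarrow> 0 \<le> f t"
  shows "pos_op (fcalc f T)"
proof -
  have B: "bop T" using P by (rule pos_op_bop)
  define F where "F = fcalc f T"
  have FB: "bop F" unfolding F_def by (rule fcalc_bop[OF P fc])
  have key: "- Re (cinner x (F x)) \<le> (2 * (norm x)\<^sup>2) * epsn n \<and> \<bar>Im (cinner x (F x))\<bar> \<le> (2 * (norm x)\<^sup>2) * epsn n" for x n
  proof -
    obtain r where r: "\<forall>t\<in>{0..onorm T}. \<bar>f t - poly r t\<bar> < epsn n"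
      using Weierstrass_poly_approx[OF fc epsn_pos] by blast
    have c: "norm (poly_op r T x - F x) \<le> epsn n * norm x"
      unfolding F_def by (rule norm_poly_op_fcalc_le[OF P fc]) (use r in \<open>auto intro: less_imp_le\<close>)
    have ppos: "pos_op (poly_op (r + [:epsn n:]) T)"
    proof (rule pos_op_poly_op[OF P order_refl])
      fix t assume "0 \<le> t" "t \<le> onorm T"
      then have "t \<in> {0..onorm T}" by simp
      then show "0 \<le> poly (r + [:epsn n:]) t" using r fnn[of t] by fastforce
    qed
    define y where "y = poly_op r T x"
    have ye: "poly_op (r + [:epsn n:]) T x = y + epsn n *\<^sub>R x" by (simp add: y_def poly_op_add poly_op_const)
    from pos_opD[OF ppos, of x] have "0 \<le> Re (cinner x (y + epsn n *\<^sub>R x))" by (simp only: ye)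
    then have re: "0 \<le> Re (cinner x y) + epsn n * (norm x)\<^sup>2"
      by (simp only: Re_cinner_add_scaleR)
    from ppos have "Im (cinner x (poly_op (r + [:epsn n:]) T x)) = 0" by (simp add: pos_op_def)
    then have "Im (cinner x (y + epsn n *\<^sub>R x)) = 0" by (simp only: ye)
    then have im: "Im (cinner x y) = 0"
      by (simp only: Im_cinner_add_scaleR)
    have d: "cmod (cinner x (F x) - cinner x y) \<le> epsn n * (norm x)\<^sup>2"
    proof -
      have "cmod (cinner x (F x) - cinner x y) = cmod (cinner x (F x - y))" by (simp add: cinner_diff_right)
      also have "\<dots> \<le> norm x * norm (F x - y)" by (rule norm_cinner_le)
      also have "\<dots> \<le> norm x * (epsn n * norm x)"
        using c by (intro mult_left_mono) (auto simp: y_def norm_minus_commute)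
      finally show ?thesis by (simp add: power2_eq_square mult_ac)
    qed
    have "\<bar>Re (cinner x (F x)) - Re (cinner x y)\<bar> \<le> epsn n * (norm x)\<^sup>2"
      using abs_Re_le_cmod[of "cinner x (F x) - cinner x y"] d by simp
    moreover have "\<bar>Im (cinner x (F x)) - Im (cinner x y)\<bar> \<le> epsn n * (norm x)\<^sup>2"
      using abs_Im_le_cmod[of "cinner x (F x) - cinner x y"] d by simp
    moreover have "0 \<le> epsn n * (norm x)\<^sup>2" by simp
    ultimately show ?thesis using re im by (simp add: algebra_simps abs_le_iff) 
  qed
  have "Im (cinner x (F x)) = 0 \<and> 0 \<le> Re (cinner x (F x))" for x
  proof -
    have "- Re (cinner x (F x)) \<le> 0" by (rule le_0_if_le_epsn) (use key in blast)
    moreover have "\<bar>Im (cinner x (F x))\<bar> \<le> 0" by (rule le_0_if_le_epsn) (use key in blast)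
    ultimately show ?thesis by simp
  qed
  then show ?thesis unfolding pos_op_def F_def using FB[unfolded F_def] by blast
qed

lemma norm_comp_self_diff_le:
  fixes F R :: "'a::real_normed_vector \<Rightarrow> 'a"
  assumes F: "bounded_linear F" and c: "\<And>y. norm (R y - F y) \<le> e * norm y"
    and e: "0 \<le> e" "e \<le> 1"
  shows "norm (F (F x) - R (R x)) \<le> (2 * onorm F + 1) * e * norm x"
proof -
  interpret F: bounded_linear F by (rule F)
  have e1: "F (F x) - R (R x) = F (F x - R x) + (F (R x) - R (R x))" by (simp add: F.diff)
  have "norm (F (F x) - R (R x)) \<le> norm (F (F x - R x)) + norm (F (R x) - R (R x))"
    unfolding e1 by (rule norm_triangle_ineq)
  also have "\<dots> \<le> onorm F * (e * norm x) + e * ((onorm F + 1) * norm x)"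
  proof (rule add_mono)
    have "norm (F (F x - R x)) \<le> onorm F * norm (F x - R x)" by (rule onorm[OF F])
    also have "\<dots> \<le> onorm F * (e * norm x)"
      using c[of x] onorm_pos_le[OF F] by (intro mult_left_mono) (auto simp: norm_minus_commute)
    finally show "norm (F (F x - R x)) \<le> onorm F * (e * norm x)" .
    have "norm (R x) \<le> norm (F x) + norm (R x - F x)" using norm_triangle_ineq[of "F x" "R x - F x"] by simp
    also have "\<dots> \<le> onorm F * norm x + e * norm x" using c[of x] onorm[OF F, of x] by simp
    also have "\<dots> \<le> (onorm F + 1) * norm x"
      using mult_right_mono[OF e(2) norm_ge_zero[of x]] by (simp add: algebra_simps)
    finally have "norm (R x) \<le> (onorm F + 1) * norm x" .
    then have "e * norm (R x) \<le> e * ((onorm F + 1) * norm x)" using e by (intro mult_left_mono) auto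
    then show "norm (F (R x) - R (R x)) \<le> e * ((onorm F + 1) * norm x)"
      using c[of "R x"] by (simp add: norm_minus_commute)
  qed
  also have "\<dots> = (2 * onorm F + 1) * e * norm x" by (simp add: algebra_simps)
  finally show ?thesis .
qed

lemma fcalc_square:
  fixes T :: "'a::chilbert \<Rightarrow> 'a"
  assumes P: "pos_op T" and fc: "continuous_on {0..onorm T} f"
    and K: "\<And>t. t \<in> {0..onorm T} \<Longrightarrow> \<bar>f t\<bar> \<le> K"
    and sq: "\<And>t. t \<in> {0..onorm T} \<Longrightarrow> f t * f t = t"
  shows "fcalc f T (fcalc f T x) = T x"
proof -
  have B: "bop T" using P by (rule pos_op_bop)
  define F where "F = fcalc f T"
  have FB: "bop F" unfolding F_def by (rule fcalc_bop[OF P fc])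
  have key: "norm (F (F x) - T x) \<le> ((2 * onorm F + 1 + 2 * K + 1) * norm x) * epsn n" for n
  proof -
    define e where "e = epsn n"
    have e0: "0 < e" "e \<le> 1" by (auto simp: e_def field_simps)
    obtain r where r: "\<forall>t\<in>{0..onorm T}. \<bar>f t - poly r t\<bar> < e"
      using Weierstrass_poly_approx[OF fc e0(1)] by blast
    define R where "R = poly_op r T"
    have c: "norm (R y - F y) \<le> e * norm y" for y
      unfolding R_def F_def by (rule norm_poly_op_fcalc_le[OF P fc]) (use r in \<open>auto intro: less_imp_le\<close>)
    have "norm (poly_op (r * r - [:0, 1:]) T x) \<le> (e * (2 * K + 1)) * norm x"
    proof (rule norm_poly_op_le[OF P order_refl])
      fix t assume "0 \<le> t" "t \<le> onorm T"
      then have t: "t \<in> {0..onorm T}" by simp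
      have a: "\<bar>f t - poly r t\<bar> \<le> e" using r t by (auto intro: less_imp_le)
      have b: "\<bar>f t + poly r t\<bar> \<le> 2 * K + 1"
        using K[OF t] a e0 by (simp add: abs_le_iff)
      have "poly (r * r - [:0, 1:]) t = - ((f t - poly r t) * (f t + poly r t))"
        using sq[OF t] by (simp add: algebra_simps)
      then have "\<bar>poly (r * r - [:0, 1:]) t\<bar> = \<bar>f t - poly r t\<bar> * \<bar>f t + poly r t\<bar>"
        by (simp add: abs_mult)
      also have "\<dots> \<le> e * (2 * K + 1)" using a b by (intro mult_mono) auto
      finally show "\<bar>poly (r * r - [:0, 1:]) t\<bar> \<le> e * (2 * K + 1)" .
    qed
    then have RRT: "norm (R (R x) - T x) \<le> (e * (2 * K + 1)) * norm x"
      by (simp add: poly_op_diff poly_op_mult[OF B] poly_op_X[OF B] R_def)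
    have "norm (F (F x) - T x) \<le> norm (F (F x) - R (R x)) + norm (R (R x) - T x)"
      by (rule norm_diff_triangle_le) (rule order_refl)+
    also have "\<dots> \<le> (2 * onorm F + 1) * e * norm x + (e * (2 * K + 1)) * norm x"
      using norm_comp_self_diff_le[OF bop_bounded_linear[OF FB] c] e0 RRT by (intro add_mono) auto
    also have "\<dots> = ((2 * onorm F + 1 + 2 * K + 1) * norm x) * e" by (simp add: algebra_simps)
    finally show ?thesis by (simp add: e_def)
  qed
  have "norm (F (F x) - T x) \<le> 0" by (rule le_0_if_le_epsn) (rule key)
  then show ?thesis by (simp add: F_def)
qed

lemma poly_op_approx_eigenvector:
  fixes S :: "'a::complex_inner \<Rightarrow> 'a"
  assumes B: "bop S" and lim: "(\<lambda>n. S (x n) - l *\<^sub>R x n) \<longlonglongrightarrow> 0"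
  shows "(\<lambda>n. poly_op p S (x n) - poly p l *\<^sub>R x n) \<longlonglongrightarrow> 0"
proof (induction p)
  case 0 then show ?case by simp
next
  case (pCons c p)
  have eq: "poly_op (pCons c p) S (x n) - poly (pCons c p) l *\<^sub>R x n
      = S (poly_op p S (x n) - poly p l *\<^sub>R x n) + poly p l *\<^sub>R (S (x n) - l *\<^sub>R x n)" for n
    by (simp add: poly_op_pCons[OF B] bop_diff[OF B] bop_scaleR[OF B] algebra_simps scaleR_add_left scaleR_diff_right)
  have t1: "(\<lambda>n. S (poly_op p S (x n) - poly p l *\<^sub>R x n)) \<longlonglongrightarrow> S 0"
    by (rule bounded_linear.tendsto[OF bop_bounded_linear[OF B] pCons.IH])
  have t2: "(\<lambda>n. poly p l *\<^sub>R (S (x n) - l *\<^sub>R x n)) \<longlonglongrightarrow> poly p l *\<^sub>R 0"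
    by (rule tendsto_scaleR[OF tendsto_const lim])
  have "(\<lambda>n. S (poly_op p S (x n) - poly p l *\<^sub>R x n) + poly p l *\<^sub>R (S (x n) - l *\<^sub>R x n)) \<longlonglongrightarrow> S 0 + poly p l *\<^sub>R 0"
    by (rule tendsto_add[OF t1 t2])
  moreover have "(\<lambda>n. poly_op (pCons c p) S (x n) - poly (pCons c p) l *\<^sub>R x n)
      = (\<lambda>n. S (poly_op p S (x n) - poly p l *\<^sub>R x n) + poly p l *\<^sub>R (S (x n) - l *\<^sub>R x n))"
    by (rule ext) (rule eq)
  ultimately show ?case by (simp add: bop_zero[OF B])
qed

lemma fcalc_approx_eigenvector:
  fixes S :: "'a::chilbert \<Rightarrow> 'a"
  assumes P: "pos_op S" and fc: "continuous_on {0..onorm S} f"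
    and x1: "\<And>n. norm (x n) = 1" and l: "l \<in> {0..onorm S}"
    and lim: "(\<lambda>n. S (x n) - l *\<^sub>R x n) \<longlonglongrightarrow> 0"
  shows "(\<lambda>n. fcalc f S (x n) - f l *\<^sub>R x n) \<longlonglongrightarrow> 0"
  unfolding LIMSEQ_iff
proof (intro allI impI)
  fix e :: real assume e: "0 < e"
  have B: "bop S" using P by (rule pos_op_bop)
  obtain r where r: "\<forall>t\<in>{0..onorm S}. \<bar>f t - poly r t\<bar> < e / 3"
    using Weierstrass_poly_approx[OF fc, of "e/3"] e by auto
  have c: "norm (poly_op r S y - fcalc f S y) \<le> e / 3 * norm y" for y
    by (rule norm_poly_op_fcalc_le[OF P fc]) (use r in \<open>auto intro: less_imp_le\<close>)
  have pe: "(\<lambda>n. poly_op r S (x n) - poly r l *\<^sub>R x n) \<longlonglongrightarrow> 0" by (rule poly_op_approx_eigenvector[OF B lim])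
  then obtain N where N: "\<And>n. n \<ge> N \<Longrightarrow> norm (poly_op r S (x n) - poly r l *\<^sub>R x n) < e / 3"
    unfolding LIMSEQ_iff using e by (metis diff_zero divide_pos_pos zero_less_numeral)
  show "\<exists>no. \<forall>n\<ge>no. norm (fcalc f S (x n) - f l *\<^sub>R x n - 0) < e"
  proof (intro exI allI impI)
    fix n assume n: "N \<le> n"
    have e1: "fcalc f S (x n) - f l *\<^sub>R x n = (fcalc f S (x n) - poly_op r S (x n))
        + (poly_op r S (x n) - poly r l *\<^sub>R x n) + (poly r l - f l) *\<^sub>R x n"
      by (simp add: algebra_simps scaleR_diff_left)
    have "norm (fcalc f S (x n) - f l *\<^sub>R x n) \<le> norm (fcalc f S (x n) - poly_op r S (x n))
        + norm (poly_op r S (x n) - poly r l *\<^sub>R x n) + norm ((poly r l - f l) *\<^sub>R x n)"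
      unfolding e1
      using norm_triangle_ineq[of "fcalc f S (x n) - poly_op r S (x n) + (poly_op r S (x n) - poly r l *\<^sub>R x n)" "(poly r l - f l) *\<^sub>R x n"]
        norm_triangle_ineq[of "fcalc f S (x n) - poly_op r S (x n)" "poly_op r S (x n) - poly r l *\<^sub>R x n"]
      by linarith
    also have "\<dots> < e / 3 + e / 3 + e / 3"
    proof -
      have "norm (fcalc f S (x n) - poly_op r S (x n)) \<le> e / 3"
        using c[of "x n"] x1[of n] by (simp add: norm_minus_commute)
      moreover have "norm ((poly r l - f l) *\<^sub>R x n) < e / 3"
        using r l x1[of n] by (simp add: abs_minus_commute)
      ultimately show ?thesis using N[OF n] by linarith
    qed
    finally show "norm (fcalc f S (x n) - f l *\<^sub>R x n - 0) < e" by simp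
  qed
qed

section \<open>The absolute value of an operator\<close>

lemma pos_op_adj_comp:
  fixes B :: "'a::chilbert \<Rightarrow> 'a"
  assumes B: "bop B"
  shows "pos_op (\<lambda>x. adj B (B x))"
  unfolding pos_op_def
proof (intro conjI allI)
  show "bop (\<lambda>x. adj B (B x))" by (rule bop_compose[OF bop_adj[OF B] B])
  fix x
  have e: "cinner x (adj B (B x)) = complex_of_real ((norm (B x))\<^sup>2)"
    using cinner_adj_right[OF B, of x "B x"] by (simp add: cinner_self)
  show "Im (cinner x (adj B (B x))) = 0" by (simp add: e)
  show "0 \<le> Re (cinner x (adj B (B x)))" by (simp add: e)
qed

lemma pos_op_abs_op:
  fixes B :: "'a::chilbert \<Rightarrow> 'a"
  assumes B: "bop B"
  shows "pos_op (abs_op B)"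
  unfolding abs_op_def
  by (rule pos_op_fcalc[OF pos_op_adj_comp[OF B] continuous_on_real_sqrt[OF continuous_on_id]]) simp

lemma abs_op_abs_op:
  fixes B :: "'a::chilbert \<Rightarrow> 'a"
  assumes B: "bop B"
  shows "abs_op B (abs_op B x) = adj B (B x)"
proof -
  define T where "T = (\<lambda>x. adj B (B x))"
  have "fcalc sqrt T (fcalc sqrt T x) = T x"
  proof (rule fcalc_square[OF pos_op_adj_comp[OF B, folded T_def]
        continuous_on_real_sqrt[OF continuous_on_id], where K = "sqrt (onorm T)"])
    fix t assume "t \<in> {0..onorm T}"
    then show "\<bar>sqrt t\<bar> \<le> sqrt (onorm T)" "sqrt t * sqrt t = t" by auto
  qed
  then show ?thesis by (simp add: abs_op_def T_def)
qed

lemma norm_abs_op: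
  fixes B :: "'a::chilbert \<Rightarrow> 'a"
  assumes B: "bop B"
  shows "norm (abs_op B x) = norm (B x)"
proof -
  have "cinner (abs_op B x) (abs_op B x) = cinner x (abs_op B (abs_op B x))"
    by (rule hermitianD[OF pos_op_hermitian[OF pos_op_abs_op[OF B]], symmetric])
  also have "\<dots> = cinner (B x) (B x)" by (simp add: abs_op_abs_op[OF B] cinner_adj_right[OF B])
  finally have "(norm (abs_op B x))\<^sup>2 = (norm (B x))\<^sup>2" by (simp add: Re_cinner_self[symmetric])
  then show ?thesis by (simp add: power2_eq_iff_nonneg)
qed

lemma norm_adj_comp_sub_sq_le:
  fixes B :: "'a::chilbert \<Rightarrow> 'a"
  assumes B: "bop B" and M: "0 < M" "onorm B \<le> M" and x: "norm x = 1"
  shows "(norm (adj B (B x) - M\<^sup>2 *\<^sub>R x))\<^sup>2 \<le> 2 * M\<^sup>2 * (M\<^sup>2 - (norm (B x))\<^sup>2)"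
proof -
  have nBx: "norm (B x) \<le> M" using norm_bop_le[OF B, of x] M x by simp
  have nBBx: "norm (adj B (B x)) \<le> M * M"
  proof -
    have "norm (adj B (B x)) \<le> onorm B * norm (B x)" by (rule norm_adj_le[OF B])
    also have "\<dots> \<le> M * M" using nBx M onorm_bop_nonneg[OF B] by (intro mult_mono) auto
    finally show ?thesis .
  qed
  have "cinner x (adj B (B x)) = cinner (B x) (B x)" by (rule cinner_adj_right[OF B, symmetric])
  then have inn: "Re (cinner (adj B (B x)) (M\<^sup>2 *\<^sub>R x)) = M\<^sup>2 * (norm (B x))\<^sup>2"
    by (simp add: cinner_scaleR_right Re_cinner_sym[of "adj B (B x)"] Re_cinner_self)
  have "(norm (adj B (B x) - M\<^sup>2 *\<^sub>R x))\<^sup>2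
      = (norm (adj B (B x)))\<^sup>2 + M\<^sup>2 * M\<^sup>2 - 2 * M\<^sup>2 * (norm (B x))\<^sup>2"
    using x unfolding norm_diff_sq inn by (simp add: power2_eq_square)
  also have "(norm (adj B (B x)))\<^sup>2 \<le> M\<^sup>2 * M\<^sup>2"
    using nBBx by (simp add: power2_eq_square mult_mono)
  finally show ?thesis by (simp add: algebra_simps)
qed

text \<open>Since \<open>|B| \<ge> 0\<close>, \<open>M \<parallel>v\<parallel> \<le> \<parallel>(|B| + M) v\<parallel>\<close>, and for \<open>v = |B| x - M x\<close> the right-hand side is
  \<open>\<parallel>B\<^sup>*B x - M\<^sup>2 x\<parallel>\<close>.\<close>
lemma norm_abs_op_sub_sq_le:
  fixes B :: "'a::chilbert \<Rightarrow> 'a"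
  assumes B: "bop B" and M: "0 < M" "onorm B \<le> M" and x: "norm x = 1"
  shows "(norm (abs_op B x - M *\<^sub>R x))\<^sup>2 \<le> 2 * (M\<^sup>2 - (norm (B x))\<^sup>2)"
proof -
  define Q where "Q = abs_op B"
  have QP: "pos_op Q" unfolding Q_def by (rule pos_op_abs_op[OF B])
  have QB: "bop Q" using QP by (rule pos_op_bop)
  have QQ: "Q (Q y) = adj B (B y)" for y unfolding Q_def by (rule abs_op_abs_op[OF B])
  define v where "v = Q x - M *\<^sub>R x"
  have Qv: "Q v + M *\<^sub>R v = adj B (B x) - M\<^sup>2 *\<^sub>R x"
    by (simp add: v_def bop_diff[OF QB] bop_scaleR[OF QB] QQ algebra_simps power2_eq_square)
  have "M * norm v \<le> norm (Q v + M *\<^sub>R v)"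
  proof (rule norm_lower_bound_Re_cinner[OF M(1)])
    show "M * (norm v)\<^sup>2 \<le> Re (cinner v (Q v + M *\<^sub>R v))"
      using pos_opD[OF QP, of v] by (simp add: Re_cinner_add_scaleR)
  qed
  then have "(M * norm v)\<^sup>2 \<le> (norm (adj B (B x) - M\<^sup>2 *\<^sub>R x))\<^sup>2"
    using M by (simp add: Qv power_mono)
  with norm_adj_comp_sub_sq_le[OF B M x]
  have "M\<^sup>2 * (norm v)\<^sup>2 \<le> M\<^sup>2 * (2 * (M\<^sup>2 - (norm (B x))\<^sup>2))"
    by (simp add: power_mult_distrib algebra_simps)
  then show ?thesis using M by (simp add: v_def Q_def)
qed

lemma abs_op_approx_eigenvector:
  fixes B :: "'a::chilbert \<Rightarrow> 'a"
  assumes B: "bop B" and X: "\<And>n. norm (X n) = 1"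
    and lim: "(\<lambda>n. norm (B (X n))) \<longlonglongrightarrow> onorm B"
  shows "(\<lambda>n. abs_op B (X n) - onorm B *\<^sub>R X n) \<longlonglongrightarrow> 0"
proof (cases "onorm B = 0")
  case True
  then have "B x = 0" for x using onorm_eq_0[OF bop_bounded_linear[OF B]] by simp
  then have "abs_op B x = 0" for x using norm_abs_op[OF B, of x] by simp
  then show ?thesis using True by simp
next
  case False
  then have M: "0 < onorm B" using onorm_bop_nonneg[OF B] by simp
  show ?thesis
  proof (rule Lim_null_comparison)
    show "\<forall>\<^sub>F n in sequentially.
        norm (abs_op B (X n) - onorm B *\<^sub>R X n) \<le> sqrt (2 * ((onorm B)\<^sup>2 - (norm (B (X n)))\<^sup>2))"
      by (intro always_eventually allI real_le_rsqrt norm_abs_op_sub_sq_le[OF B M order_refl X])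
    have "(\<lambda>n. sqrt (2 * ((onorm B)\<^sup>2 - (norm (B (X n)))\<^sup>2)))
        \<longlonglongrightarrow> sqrt (2 * ((onorm B)\<^sup>2 - (onorm B)\<^sup>2))"
      by (intro tendsto_intros lim)
    then show "(\<lambda>n. sqrt (2 * ((onorm B)\<^sup>2 - (norm (B (X n)))\<^sup>2))) \<longlonglongrightarrow> 0" by simp
  qed
qed

lemma Re_cinner_square_diff:
  fixes C B :: "'a::complex_inner \<Rightarrow> 'a"
  assumes "hermitian C" and "hermitian B"
  shows "Re (cinner x (C (C x))) - Re (cinner x (B (B x))) = Re (cinner (C x + B x) (C x - B x))"
  using hermitianD[OF assms(1), of x "C x"] hermitianD[OF assms(2), of x "B x"]
    Re_cinner_sym[of "B x" "C x"]
  by (simp add: cinner_add_left cinner_diff_right)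

text \<open>If \<open>\<langle>(C - B) x, x\<rangle> < 0\<close> somewhere, take an approximate eigenvector \<open>x\<close> of \<open>D = C - B\<close> for a
  negative approximate eigenvalue \<open>m\<close>: then \<open>\<langle>(C + B) x, D x\<rangle> \<approx> m \<langle>(C + B) x, x\<rangle>\<close> is negative,
  contradicting \<open>C\<^sup>2 \<ge> B\<^sup>2\<close>.\<close>
lemma pos_op_le_if_squares_le:
  fixes C B :: "'a::complex_inner \<Rightarrow> 'a"
  assumes PC: "pos_op C" and PB: "pos_op B"
    and sq: "\<And>x. Re (cinner x (B (B x))) \<le> Re (cinner x (C (C x)))"
  shows "Re (cinner x (B x)) \<le> Re (cinner x (C x))"
proof (rule ccontr)
  assume neg: "\<not> ?thesis"
  define D where "D = (\<lambda>x. C x - B x)"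
  have CB: "bop C" and BB: "bop B" using PC PB by (auto intro: pos_op_bop)
  have HC: "hermitian C" and HB: "hermitian B" using PC PB by (auto intro: pos_op_hermitian)
  have DB: "bop D" unfolding D_def by (rule bop_diff_op[OF CB BB])
  have DH: "hermitian D" unfolding D_def hermitian_def
    by (simp add: cinner_diff_left cinner_diff_right hermitianD[OF HC] hermitianD[OF HB])
  have "Re (cinner x (D x)) < 0" using neg by (simp add: D_def cinner_diff_right)
  then obtain m where m: "m < 0"
    and ap: "\<And>e. e > 0 \<Longrightarrow> \<exists>x. norm x = 1 \<and> norm (D x - m *\<^sub>R x) < e"
    using approx_eigenvalue_inf_numerical_range[OF DB DH] by blast
  define K where "K = onorm C + onorm B"
  have K0: "0 \<le> K" unfolding K_def using onorm_bop_nonneg[OF CB] onorm_bop_nonneg[OF BB] by simp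
  define e where "e = m\<^sup>2 / (2 * (K - m))"
  have e0: "0 < e" using m K0 by (simp add: e_def)
  obtain x where x: "norm x = 1" and ex: "norm (D x - m *\<^sub>R x) < e" using ap[OF e0] by blast
  define r where "r = D x - m *\<^sub>R x"
  have Dx: "D x = m *\<^sub>R x + r" by (simp add: r_def)
  define s where "s = Re (cinner x (C x)) + Re (cinner x (B x))"
  have nn: "0 \<le> Re (cinner (C x + B x) (D x))"
    using Re_cinner_square_diff[OF HC HB, of x] sq[of x] by (simp add: D_def)
  have t1: "Re (cinner (C x + B x) (D x)) = m * s + Re (cinner (C x + B x) r)"
  proof -
    have "Re (cinner (C x + B x) x) = s" by (simp add: s_def cinner_add_left Re_cinner_sym)
    then show ?thesis by (simp add: Dx cinner_add_right cinner_scaleR_right)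
  qed
  have "Re (cinner (C x + B x) r) \<le> norm (C x + B x) * norm r" by (rule Re_cinner_le)
  also have "\<dots> \<le> K * e"
  proof (rule mult_mono)
    show "norm (C x + B x) \<le> K"
      using norm_triangle_ineq[of "C x" "B x"] norm_bop_le[OF CB, of x] norm_bop_le[OF BB, of x] x
      by (simp add: K_def)
  qed (use ex K0 in \<open>auto simp: r_def\<close>)
  finally have ms: "- (K * e) \<le> m * s" using nn t1 by linarith
  have "Re (cinner x (D x)) = m + Re (cinner x r)"
    using x by (simp add: Dx cinner_add_right cinner_scaleR_right Re_cinner_self)
  moreover have "Re (cinner x r) \<le> e" using Re_cinner_le[of x r] x ex by (simp add: r_def)
  moreover have "- s \<le> Re (cinner x (D x))"
    using pos_opD[OF PC, of x] pos_opD[OF PB, of x] by (simp add: D_def cinner_diff_right s_def)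
  ultimately have "m * s \<le> m * (- m - e)" using m by (simp add: mult_le_cancel_left)
  with ms have "m\<^sup>2 \<le> e * (K - m)" by (simp add: power2_eq_square algebra_simps)
  also have "e * (K - m) = m\<^sup>2 / 2" using m K0 by (simp add: e_def field_simps)
  finally show False using m by simp
qed

section \<open>Approximate eigenvectors\<close>

lemma onorm_approx:
  fixes T :: "'a::complex_inner \<Rightarrow> 'a"
  assumes T: "bop T" and nontriv: "\<exists>x::'a. x \<noteq> 0" and eta: "0 < eta"
  shows "\<exists>y. norm y = 1 \<and> onorm T - eta < norm (T y)"
proof (rule ccontr)
  assume "\<not> ?thesis"
  then have all: "\<And>y. norm y = 1 \<Longrightarrow> norm (T y) \<le> onorm T - eta" by (auto simp: not_less)
  obtain u :: 'a where "u \<noteq> 0" using nontriv by blast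
  then have "norm (T ((1 / norm u) *\<^sub>R u)) \<le> onorm T - eta" by (intro all) simp
  then have bound0: "0 \<le> onorm T - eta" by (rule order_trans[OF norm_ge_zero])
  have "norm (T y) \<le> (onorm T - eta) * norm y" for y
  proof (cases "y = 0")
    case True then show ?thesis by (simp add: bop_zero[OF T])
  next
    case False
    then have "norm (T ((1 / norm y) *\<^sub>R y)) \<le> onorm T - eta" by (intro all) simp
    then show ?thesis using False by (simp add: bop_scaleR[OF T] field_simps)
  qed
  then have "onorm T \<le> onorm T - eta" by (rule onorm_bound[OF bound0])
  then show False using eta by simp
qed

lemma onorm_approx_seq:
  fixes T :: "'a::complex_inner \<Rightarrow> 'a"
  assumes T: "bop T" and nontriv: "\<exists>x::'a. x \<noteq> 0"
  obtains X where "\<And>n. norm (X n) = 1" and "(\<lambda>n. norm (T (X n))) \<longlonglongrightarrow> onorm T"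
proof -
  have "\<forall>n. \<exists>y. norm y = 1 \<and> onorm T - epsn n < norm (T y)"
    using onorm_approx[OF T nontriv epsn_pos] by blast
  then obtain X where X: "\<And>n. norm (X n) = 1" and lo: "\<And>n. onorm T - epsn n < norm (T (X n))"
    by metis
  have "(\<lambda>n. norm (T (X n))) \<longlonglongrightarrow> onorm T"
  proof (rule tendsto_sandwich)
    show "(\<lambda>n. onorm T - epsn n) \<longlonglongrightarrow> onorm T"
      using tendsto_diff[OF tendsto_const LIMSEQ_epsn] by simp
    have "onorm T - epsn n \<le> norm (T (X n))" for n using lo[of n] by simp
    then show "\<forall>\<^sub>F n in sequentially. onorm T - epsn n \<le> norm (T (X n))" by simp
    have "norm (T (X n)) \<le> onorm T" for n using norm_bop_le[OF T, of "X n"] X[of n] by simp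
    then show "\<forall>\<^sub>F n in sequentially. norm (T (X n)) \<le> onorm T" by simp
  qed simp
  then show ?thesis using X that by blast
qed

lemma approx_eigenvalue_abs_le_onorm:
  fixes S :: "'a::complex_inner \<Rightarrow> 'a"
  assumes S: "bop S" and X: "\<And>n. norm (X n) = 1" and lim: "(\<lambda>n. S (X n) - L *\<^sub>R X n) \<longlonglongrightarrow> 0"
  shows "\<bar>L\<bar> \<le> onorm S"
proof (rule LIMSEQ_le_const2)
  show "(\<lambda>n. \<bar>L\<bar> - norm (S (X n) - L *\<^sub>R X n)) \<longlonglongrightarrow> \<bar>L\<bar>"
    using tendsto_diff[OF tendsto_const[of "\<bar>L\<bar>"] tendsto_norm_zero[OF lim]] by simp
  show "\<exists>N. \<forall>n\<ge>N. \<bar>L\<bar> - norm (S (X n) - L *\<^sub>R X n) \<le> onorm S"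
  proof (intro exI allI impI)
    fix n
    have "\<bar>L\<bar> = norm (L *\<^sub>R X n)" using X[of n] by simp
    also have "\<dots> \<le> norm (S (X n)) + norm (S (X n) - L *\<^sub>R X n)"
      using norm_triangle_sub[of "L *\<^sub>R X n" "S (X n)"] by (simp add: norm_minus_commute)
    also have "norm (S (X n)) \<le> onorm S" using norm_bop_le[OF S, of "X n"] X[of n] by simp
    finally show "\<bar>L\<bar> - norm (S (X n) - L *\<^sub>R X n) \<le> onorm S" by simp
  qed
qed

lemma Re_cinner_approx_eigenvector:
  fixes Q :: "'a::complex_inner \<Rightarrow> 'a"
  assumes X: "\<And>n. norm (X n) = 1" and lim: "(\<lambda>n. Q (X n) - M *\<^sub>R X n) \<longlonglongrightarrow> 0"
  shows "(\<lambda>n. Re (cinner (X n) (Q (X n)))) \<longlonglongrightarrow> M"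
proof -
  have small: "(\<lambda>n. Re (cinner (X n) (Q (X n) - M *\<^sub>R X n))) \<longlonglongrightarrow> 0"
  proof (rule Lim_null_comparison[OF _ tendsto_norm_zero[OF lim]])
    have "\<bar>Re (cinner (X n) (Q (X n) - M *\<^sub>R X n))\<bar> \<le> norm (X n) * norm (Q (X n) - M *\<^sub>R X n)" for n
      using abs_Re_le_cmod order_trans norm_cinner_le by blast
    then show "\<forall>\<^sub>F n in sequentially.
        norm (Re (cinner (X n) (Q (X n) - M *\<^sub>R X n))) \<le> norm (Q (X n) - M *\<^sub>R X n)"
      using X by simp
  qed
  have "Re (cinner (X n) (Q (X n))) = M + Re (cinner (X n) (Q (X n) - M *\<^sub>R X n))" for n
    using X[of n] by (simp add: cinner_diff_right cinner_scaleR_right Re_cinner_self)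
  then show ?thesis using tendsto_add[OF tendsto_const[of M] small] by simp
qed

lemma onorm_fcalc_add_ge:
  fixes S1 S2 :: "'a::chilbert \<Rightarrow> 'a"
  assumes P1: "pos_op S1" and P2: "pos_op S2" and f: "continuous_on {0..} f"
    and X: "\<And>n. norm (X n) = 1" and L: "0 \<le> L"
    and l1: "(\<lambda>n. S1 (X n) - L *\<^sub>R X n) \<longlonglongrightarrow> 0"
    and l2: "(\<lambda>n. S2 (X n) - L *\<^sub>R X n) \<longlonglongrightarrow> 0"
  shows "2 * f L \<le> onorm (\<lambda>x. fcalc f S1 x + fcalc f S2 x)"
proof -
  have fc: "continuous_on {0..onorm S} f" for S :: "'a \<Rightarrow> 'a"
    by (rule continuous_on_subset[OF f]) auto
  have "L \<le> onorm S1" using approx_eigenvalue_abs_le_onorm[OF pos_op_bop[OF P1] X l1] by simp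
  then have e1: "(\<lambda>n. fcalc f S1 (X n) - f L *\<^sub>R X n) \<longlonglongrightarrow> 0"
    using fcalc_approx_eigenvector[OF P1 fc X _ l1] L by simp
  have "L \<le> onorm S2" using approx_eigenvalue_abs_le_onorm[OF pos_op_bop[OF P2] X l2] by simp
  then have e2: "(\<lambda>n. fcalc f S2 (X n) - f L *\<^sub>R X n) \<longlonglongrightarrow> 0"
    using fcalc_approx_eigenvector[OF P2 fc X _ l2] L by simp
  have "(\<lambda>n. (fcalc f S1 (X n) + fcalc f S2 (X n)) - (2 * f L) *\<^sub>R X n) \<longlonglongrightarrow> 0"
    using tendsto_add[OF e1 e2] by (simp add: algebra_simps scaleR_add_left[symmetric])
  then have "\<bar>2 * f L\<bar> \<le> onorm (\<lambda>x. fcalc f S1 x + fcalc f S2 x)"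
    by (rule approx_eigenvalue_abs_le_onorm[OF bop_add_op[OF fcalc_bop[OF P1 fc] fcalc_bop[OF P2 fc]] X])
  then show ?thesis by simp
qed

section \<open>Hyponormal operators\<close>

lemma hyponormal_norm_adj_le:
  fixes A :: "'a::chilbert \<Rightarrow> 'a"
  assumes hypo: "hyponormal A"
  shows "norm (adj A x) \<le> norm (A x)"
proof -
  have A: "bop A" and hp: "pos_op (\<lambda>x. adj A (A x) - A (adj A x))"
    using hypo by (auto simp: hyponormal_def)
  have "cinner x (adj A (A x)) = cinner (A x) (A x)" by (rule cinner_adj_right[OF A, symmetric])
  moreover have "cinner x (A (adj A x)) = cinner (adj A x) (adj A x)"
    by (rule cinner_adj_left[OF A, symmetric])
  ultimately have "(norm (adj A x))\<^sup>2 \<le> (norm (A x))\<^sup>2"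
    using pos_opD[OF hp, of x] by (simp add: cinner_diff_right Re_cinner_self)
  then show ?thesis by (rule power2_le_imp_le) simp
qed

text \<open>For hyponormal \<open>A\<close>, \<open>\<parallel>A\<^sup>* x\<parallel> \<le> \<parallel>A x\<parallel> \<le> \<parallel>A\<parallel> = \<parallel>A\<^sup>*\<parallel>\<close>, so unit vectors almost attaining the norm of \<open>A\<^sup>*\<close>
  almost attain the norm of \<open>A\<close> as well.\<close>
lemma hyponormal_approx_eigenvector_abs_op:
  fixes A :: "'a::chilbert \<Rightarrow> 'a"
  assumes hypo: "hyponormal A" and nontriv: "\<exists>x::'a. x \<noteq> 0"
  obtains X where "\<And>n. norm (X n) = 1"
    and "(\<lambda>n. abs_op A (X n) - onorm A *\<^sub>R X n) \<longlonglongrightarrow> 0"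
    and "(\<lambda>n. abs_op (adj A) (X n) - onorm A *\<^sub>R X n) \<longlonglongrightarrow> 0"
proof -
  have A: "bop A" using hypo by (simp add: hyponormal_def)
  have As: "bop (adj A)" by (rule bop_adj[OF A])
  obtain X where X: "\<And>n. norm (X n) = 1" and lAs: "(\<lambda>n. norm (adj A (X n))) \<longlonglongrightarrow> onorm A"
    using onorm_approx_seq[OF As nontriv, unfolded onorm_adj[OF A]] by blast
  have lA: "(\<lambda>n. norm (A (X n))) \<longlonglongrightarrow> onorm A"
  proof (rule tendsto_sandwich[OF _ _ lAs tendsto_const])
    show "\<forall>\<^sub>F n in sequentially. norm (adj A (X n)) \<le> norm (A (X n))"
      using hyponormal_norm_adj_le[OF hypo] by simp
    have "norm (A (X n)) \<le> onorm A" for n using norm_bop_le[OF A, of "X n"] X[of n] by simp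
    then show "\<forall>\<^sub>F n in sequentially. norm (A (X n)) \<le> onorm A" by simp
  qed
  show ?thesis
  proof (rule that[OF X])
    show "(\<lambda>n. abs_op A (X n) - onorm A *\<^sub>R X n) \<longlonglongrightarrow> 0"
      by (rule abs_op_approx_eigenvector[OF A X lA])
    show "(\<lambda>n. abs_op (adj A) (X n) - onorm A *\<^sub>R X n) \<longlonglongrightarrow> 0"
      using abs_op_approx_eigenvector[OF As X] lAs by (simp add: onorm_adj[OF A])
  qed
qed

lemma hyponormal_abs_op_adj_le:
  fixes A :: "'a::chilbert \<Rightarrow> 'a"
  assumes hypo: "hyponormal A"
  shows "Re (cinner x (abs_op (adj A) x)) \<le> Re (cinner x (abs_op A x))"
proof (rule pos_op_le_if_squares_le)
  have A: "bop A" using hypo by (simp add: hyponormal_def)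
  show "pos_op (abs_op A)" "pos_op (abs_op (adj A))" by (intro pos_op_abs_op bop_adj A)+
  fix y
  have "(norm (adj A y))\<^sup>2 \<le> (norm (A y))\<^sup>2"
    using hyponormal_norm_adj_le[OF hypo] by (simp add: power_mono)
  moreover have "cinner y (abs_op A (abs_op A y)) = cinner (A y) (A y)"
    by (simp add: abs_op_abs_op[OF A] cinner_adj_right[OF A])
  moreover have "cinner y (abs_op (adj A) (abs_op (adj A) y)) = cinner (adj A y) (adj A y)"
    by (simp add: abs_op_abs_op[OF bop_adj[OF A]] adj_adj[OF A] cinner_adj_left[OF A])
  ultimately show "Re (cinner y (abs_op (adj A) (abs_op (adj A) y))) \<le> Re (cinner y (abs_op A (abs_op A y)))"
    by (simp add: Re_cinner_self)
qed

lemma cInf_eq_0_if_nonneg_tendsto: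
  fixes S :: "real set"
  assumes nonneg: "\<And>t. t \<in> S \<Longrightarrow> 0 \<le> t"
    and mem: "\<forall>\<^sub>F n in sequentially. u n \<in> S" and lim: "u \<longlonglongrightarrow> 0"
  shows "Inf S = 0"
proof (rule antisym)
  obtain N where N: "\<And>n. n \<ge> N \<Longrightarrow> u n \<in> S" using mem by (auto simp: eventually_sequentially)
  have bdd: "bdd_below S" using nonneg by (intro bdd_belowI) blast
  show "Inf S \<le> 0"
    by (rule LIMSEQ_le_const[OF lim]) (use N cInf_lower[OF _ bdd] in blast)
  show "0 \<le> Inf S" using N[OF order_refl] by (intro cInf_greatest nonneg) auto
qed

text \<open>The infimum defining \<open>\<xi>\<^sub>|\<^sub>A\<^sub>|\<close> is over nonnegative quotients (as \<open>|A\<^sup>*| \<le> |A|\<close>), and along a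
  common approximate eigenvector of \<open>|A|\<close> and \<open>|A\<^sup>*|\<close> for \<open>\<parallel>A\<parallel>\<close> the quotients tend to \<open>0 / (2\<parallel>A\<parallel>)\<close>.
  So the refinement factor in the theorem is always \<open>1\<close>.\<close>
lemma xi_op_hyponormal:
  fixes A :: "'a::chilbert \<Rightarrow> 'a"
  assumes hypo: "hyponormal A" and M: "onorm A \<noteq> 0"
  shows "xi_op A = 0"
proof -
  have A: "bop A" using hypo by (simp add: hyponormal_def)
  have "\<exists>x::'a. x \<noteq> 0"
  proof (rule ccontr)
    assume "\<nexists>x::'a. x \<noteq> 0"
    then have "A x = 0" for x by blast
    then show False using M onorm_eq_0[OF bop_bounded_linear[OF A]] by simp
  qed
  then obtain X where X: "\<And>n. norm (X n) = 1"
    and l1: "(\<lambda>n. abs_op A (X n) - onorm A *\<^sub>R X n) \<longlonglongrightarrow> 0"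
    and l2: "(\<lambda>n. abs_op (adj A) (X n) - onorm A *\<^sub>R X n) \<longlonglongrightarrow> 0"
    using hyponormal_approx_eigenvector_abs_op[OF hypo] by blast
  define num where "num = (\<lambda>x. Re (cinner x (abs_op A x - abs_op (adj A) x)))"
  define den where "den = (\<lambda>x. Re (cinner x (abs_op A x + abs_op (adj A) x)))"
  have M0: "0 < onorm A" using M onorm_bop_nonneg[OF A] by simp
  have r1: "(\<lambda>n. Re (cinner (X n) (abs_op A (X n)))) \<longlonglongrightarrow> onorm A"
    by (rule Re_cinner_approx_eigenvector[OF X l1])
  have r2: "(\<lambda>n. Re (cinner (X n) (abs_op (adj A) (X n)))) \<longlonglongrightarrow> onorm A"
    by (rule Re_cinner_approx_eigenvector[OF X l2])
  have td: "(\<lambda>n. den (X n)) \<longlonglongrightarrow> 2 * onorm A"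
    using tendsto_add[OF r1 r2] by (simp add: den_def cinner_add_right)
  have "xi_op A = Inf {num x / den x | x. norm x = 1 \<and> den x \<noteq> 0}"
    by (simp add: xi_op_def num_def den_def)
  also have "\<dots> = 0"
  proof (rule cInf_eq_0_if_nonneg_tendsto)
    show "0 \<le> t" if "t \<in> {num x / den x | x. norm x = 1 \<and> den x \<noteq> 0}" for t
    proof -
      from that obtain x where t: "t = num x / den x" by blast
      have "0 \<le> num x"
        using hyponormal_abs_op_adj_le[OF hypo, of x] by (simp add: num_def cinner_diff_right)
      moreover have "0 \<le> den x"
        using pos_opD[OF pos_op_abs_op[OF A], of x] pos_opD[OF pos_op_abs_op[OF bop_adj[OF A]], of x]
        by (simp add: den_def cinner_add_right)
      ultimately show ?thesis by (simp add: t)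
    qed
    have "\<forall>\<^sub>F n in sequentially. 0 < den (X n)" by (rule order_tendstoD(1)[OF td]) (use M0 in simp)
    then show "\<forall>\<^sub>F n in sequentially. num (X n) / den (X n) \<in> {num x / den x | x. norm x = 1 \<and> den x \<noteq> 0}"
    proof (rule eventually_mono)
      fix n assume "0 < den (X n)"
      then show "num (X n) / den (X n) \<in> {num x / den x | x. norm x = 1 \<and> den x \<noteq> 0}"
        using X[of n] by (intro CollectI exI[of _ "X n"]) simp
    qed
    have "(\<lambda>n. num (X n)) \<longlonglongrightarrow> 0"
      using tendsto_diff[OF r1 r2] by (simp add: num_def cinner_diff_right)
    from tendsto_divide[OF this td] show "(\<lambda>n. num (X n) / den (X n)) \<longlonglongrightarrow> 0"
      using M0 by simp
  qed
  finally show ?thesis .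
qed

lemma numrad_le_onorm:
  fixes A :: "'a::complex_inner \<Rightarrow> 'a"
  assumes A: "bop A" and nontriv: "\<exists>x::'a. x \<noteq> 0"
  shows "0 \<le> numrad A" and "numrad A \<le> onorm A"
proof -
  have bound: "cmod (cinner x (A x)) \<le> onorm A" if "norm x = 1" for x
    using norm_cinner_le[of x "A x"] norm_bop_le[OF A, of x] that by simp
  obtain u :: 'a where "u \<noteq> 0" using nontriv by blast
  then have u: "(1 / norm u) *\<^sub>R u \<in> {x. norm x = 1}" by simp
  then have "{x::'a. norm x = 1} \<noteq> {}" by blast
  then show "numrad A \<le> onorm A" unfolding numrad_def by (rule cSUP_least) (simp add: bound)
  have "bdd_above ((\<lambda>x. cmod (cinner x (A x))) ` {x. norm x = 1})"
    using bound by (intro bdd_aboveI) blast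
  then show "0 \<le> numrad A" unfolding numrad_def using u by (rule cSUP_upper2) simp
qed

theorem theorem2p4:
  fixes A :: "'a::chilbert \<Rightarrow> 'a" and f :: "real \<Rightarrow> real"
  assumes nontriv: "\<exists>x::'a. x \<noteq> 0"
    and hypo: "hyponormal A"
    and f_nonneg: "\<forall>t\<ge>0. 0 \<le> f t"
    and f_mono: "mono_on {0..} f"
    and f_opconv: "operator_convex TYPE('a) f"
  shows "f (numrad A) \<le> 1/2 * onorm (\<lambda>x.
            fcalc f (\<lambda>y. (1 / (1 + (xi_op A)\<^sup>2 / 8)) *\<^sub>R abs_op A y) x +
            fcalc f (\<lambda>y. (1 / (1 + (xi_op A)\<^sup>2 / 8)) *\<^sub>R abs_op (adj A) y) x)"
proof -
  have A: "bop A" using hypo by (simp add: hyponormal_def)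
  define M where "M = onorm A"
  define c where "c = 1 / (1 + (xi_op A)\<^sup>2 / 8)"
  obtain X where X: "\<And>n. norm (X n) = 1"
    and l1: "(\<lambda>n. abs_op A (X n) - M *\<^sub>R X n) \<longlonglongrightarrow> 0"
    and l2: "(\<lambda>n. abs_op (adj A) (X n) - M *\<^sub>R X n) \<longlonglongrightarrow> 0"
    using hyponormal_approx_eigenvector_abs_op[OF hypo nontriv] unfolding M_def by blast
  have cM: "c * M = M" using xi_op_hyponormal[OF hypo] by (cases "M = 0") (auto simp: c_def M_def)
  have scaled: "(\<lambda>n. c *\<^sub>R Q (X n) - M *\<^sub>R X n) \<longlonglongrightarrow> 0"
    if "(\<lambda>n. Q (X n) - M *\<^sub>R X n) \<longlonglongrightarrow> 0" for Q :: "'a \<Rightarrow> 'a"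
    using tendsto_scaleR[OF tendsto_const[of c] that] by (simp add: scaleR_diff_right cM)
  have c0: "0 \<le> c" by (simp add: c_def add_nonneg_nonneg)
  have "2 * f M \<le> onorm (\<lambda>x. fcalc f (\<lambda>y. c *\<^sub>R abs_op A y) x + fcalc f (\<lambda>y. c *\<^sub>R abs_op (adj A) y) x)"
  proof (rule onorm_fcalc_add_ge[OF _ _ _ X _ scaled[OF l1] scaled[OF l2]])
    show "pos_op (\<lambda>y. c *\<^sub>R abs_op A y)" "pos_op (\<lambda>y. c *\<^sub>R abs_op (adj A) y)"
      by (intro pos_op_scaleR pos_op_abs_op bop_adj A c0)+
    show "continuous_on {0..} f" using f_opconv by (simp add: operator_convex_def)
    show "0 \<le> M" by (simp add: M_def onorm_bop_nonneg[OF A])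
  qed
  moreover have "f (numrad A) \<le> f M"
    using numrad_le_onorm[OF A nontriv] unfolding M_def by (intro mono_onD[OF f_mono]) auto
  ultimately show ?thesis by (simp add: c_def)
qed

end
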